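(* The expected value of $d_4(\nu)$, where $\nu$ is chosen uniformly among all convex polyominoes with $d_2(\nu)+d_3(\nu)=n$, is asymptotic as $n\to\infty$ to $$\frac{n}{\sqrt{5}}-\frac{\sqrt[4]{125}(\sqrt{5}-1)\sqrt{n}}{10\sqrt{\pi}},$$ where $f_n\sim g_n$ means $\lim_{n\to\infty}f_n/g_n=1$.
   Context: A cell is a unit square in the plane whose center is an integer point and whose sides are parallel to the axes. A polyomino is a finite set of cells which is connected under edge-adjacency; polyominoes are considered up to translation. A polyomino is convex if each of its columns and each of its rows is a single contiguous block of cells. A vertex of $\nu$ is a corner of some cell of $\nu$; it is interior if it is a corner of exactly four cells of $\nu$, and a boundary vertex otherwise. The degree of a vertex $w$ of $\nu$ is the number of unit edges that are sides of cells of $\nu$ and have $w$ as an endpoint. $d_m(\nu)$ denotes the number of boundary vertices of $\nu$ of degree $m$ ($m=2,3,4$). *)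

theory Defs
  imports Complex_Main
begin

text \<open>A cell is identified with its integer center. A polyomino is a finite nonempty
set of cells connected under edge-adjacency.\<close>

type_synonym cell = "int \<times> int"

definition edge_adj :: "cell \<Rightarrow> cell \<Rightarrow> bool" where
  "edge_adj c d \<longleftrightarrow> \<bar>fst c - fst d\<bar> + \<bar>snd c - snd d\<bar> = 1"

definition polyomino :: "cell set \<Rightarrow> bool" where
  "polyomino P \<longleftrightarrow> finite P \<and> P \<noteq> {} \<and>
     (\<forall>c\<in>P. \<forall>d\<in>P. (c, d) \<in> {(a, b). a \<in> P \<and> b \<in> P \<and> edge_adj a b}\<^sup>*)"

definition convex_polyomino :: "cell set \<Rightarrow> bool" where
  "convex_polyomino P \<longleftrightarrow> polyomino P \<and>
     (\<forall>y x1 x2 x. (x1, y) \<in> P \<longrightarrow> (x2, y) \<in> P \<longrightarrow> x1 \<le> x \<longrightarrow> x \<le> x2 \<longrightarrow> (x, y) \<in> P) \<and>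
     (\<forall>x y1 y2 y. (x, y1) \<in> P \<longrightarrow> (x, y2) \<in> P \<longrightarrow> y1 \<le> y \<longrightarrow> y \<le> y2 \<longrightarrow> (x, y) \<in> P)"

text \<open>Vertices: the cell with center (a,b) has corners (a \<plusminus> 1/2, b \<plusminus> 1/2). We encode the
point (i - 1/2, j - 1/2) by the integer pair (i,j); thus vertex (i,j) is a corner of the
cells (i,j), (i-1,j), (i,j-1), (i-1,j-1).\<close>

definition corner_cells :: "int \<times> int \<Rightarrow> cell set" where
  "corner_cells v = {(fst v, snd v), (fst v - 1, snd v), (fst v, snd v - 1), (fst v - 1, snd v - 1)}"

definition vertices :: "cell set \<Rightarrow> (int \<times> int) set" where
  "vertices P = {v. corner_cells v \<inter> P \<noteq> {}}"

definition interior_vertex :: "cell set \<Rightarrow> int \<times> int \<Rightarrow> bool" where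
  "interior_vertex P v \<longleftrightarrow> corner_cells v \<subseteq> P"

text \<open>Unit edges at vertex (i,j): a unit segment is a side of a cell of P iff one of the two
cells adjacent to that segment belongs to P.\<close>

definition unit_edges_at :: "cell set \<Rightarrow> int \<times> int \<Rightarrow> (int \<times> int) set" where
  "unit_edges_at P v = (let i = fst v; j = snd v in
     {w. (w = (i + 1, j) \<and> ((i, j) \<in> P \<or> (i, j - 1) \<in> P))
       \<or> (w = (i - 1, j) \<and> ((i - 1, j) \<in> P \<or> (i - 1, j - 1) \<in> P))
       \<or> (w = (i, j + 1) \<and> ((i, j) \<in> P \<or> (i - 1, j) \<in> P))
       \<or> (w = (i, j - 1) \<and> ((i, j - 1) \<in> P \<or> (i - 1, j - 1) \<in> P))})"

definition vdegree :: "cell set \<Rightarrow> int \<times> int \<Rightarrow> nat" where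
  "vdegree P v = card (unit_edges_at P v)"

definition d :: "nat \<Rightarrow> cell set \<Rightarrow> nat" where
  "d m P = card {v \<in> vertices P. \<not> interior_vertex P v \<and> vdegree P v = m}"

text \<open>Polyominoes are considered up to translation; we pick the unique translate
whose minimal x- and y-coordinates are 0 as representative.\<close>

definition normalized :: "cell set \<Rightarrow> bool" where
  "normalized P \<longleftrightarrow> (\<forall>c\<in>P. 0 \<le> fst c \<and> 0 \<le> snd c) \<and>
     (\<exists>c\<in>P. fst c = 0) \<and> (\<exists>c\<in>P. snd c = 0)"

definition convex_polys_n :: "nat \<Rightarrow> cell set set" where
  "convex_polys_n n = {P. convex_polyomino P \<and> normalized P \<and> d 2 P + d 3 P = n}"

definition expected_d4 :: "nat \<Rightarrow> real" where
  "expected_d4 n = (\<Sum>P\<in>convex_polys_n n. real (d 4 P)) / real (card (convex_polys_n n))"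

end

theory Submission
  imports Defs
begin

text \<open>A convex polyomino is a sequence of overlapping columns whose tops form a unimodal
  sequence and whose bottoms form an inverted unimodal one. Reading the columns from left to
  right, \<open>d\<^sub>2 + d\<^sub>3\<close> counts \<open>max 1 \<bar>\<Delta>\<bar>\<close> for every change \<open>\<Delta>\<close> of the top and of the bottom,
  plus the heights of the two end columns, while \<open>d\<^sub>4\<close> counts the non-zero changes.
  Encoding a polyomino by its changes shows that \<open>\<Sum> x\<^sup>n y\<^bsup>d\<^sub>4\<^esup>\<close>, summed over the polyominoes with
  \<open>d\<^sub>2 + d\<^sub>3 = n\<close>, is polynomially bounded in \<open>n\<close> as soon as \<open>x + y x / (1 - x) \<le> 1\<close>;
  on the other hand an explicit family shows that there are at least
  \<open>((3 + sqrt 5) / 2)\<^sup>n\<close> such polyominoes up to a polynomial factor. Taking \<open>x\<close> on the critical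
  curve, an exponential Chebyshev bound shows that the proportion of polyominoes with
  \<open>d\<^sub>4 \<ge> a n\<close> (resp. \<open>d\<^sub>4 \<le> a n\<close>) tends to 0 for every \<open>a > 1 / sqrt 5\<close> (resp. \<open>a < 1 / sqrt 5\<close>).
  Hence \<open>E d\<^sub>4 / n \<rightarrow> 1 / sqrt 5\<close>, and the \<open>sqrt n\<close> correction in the statement is of lower order.\<close>

section \<open>Counting boundary vertices column by column\<close>

text \<open>The arguments tell which of the cells below left, above left, below right and above right
  of a vertex belong to the polyomino; the sum is the degree of the vertex.\<close>

definition boundary_degree_in :: "nat set \<Rightarrow> bool \<Rightarrow> bool \<Rightarrow> bool \<Rightarrow> bool \<Rightarrow> bool" where
  "boundary_degree_in M A B C D \<longleftrightarrow> (A \<or> B \<or> C \<or> D) \<and> \<not> (A \<and> B \<and> C \<and> D) \<and>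
     of_bool (C \<or> D) + of_bool (A \<or> B) + of_bool (B \<or> D) + of_bool (A \<or> C) \<in> M"

definition corner_pattern_vertices ::
    "(bool \<Rightarrow> bool \<Rightarrow> bool \<Rightarrow> bool \<Rightarrow> bool) \<Rightarrow> cell set \<Rightarrow> (int \<times> int) set" where
  "corner_pattern_vertices pat P =
     {(i, j). pat ((i - 1, j - 1) \<in> P) ((i - 1, j) \<in> P) ((i, j - 1) \<in> P) ((i, j) \<in> P)}"

lemma vdegree_eq:
  "vdegree P (i, j) =
     of_bool ((i, j - 1) \<in> P \<or> (i, j) \<in> P) + of_bool ((i - 1, j - 1) \<in> P \<or> (i - 1, j) \<in> P)
   + of_bool ((i - 1, j) \<in> P \<or> (i, j) \<in> P) + of_bool ((i - 1, j - 1) \<in> P \<or> (i, j - 1) \<in> P)"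
proof -
  have "unit_edges_at P (i, j) =
     (if (i, j) \<in> P \<or> (i, j - 1) \<in> P then {(i + 1, j)} else {}) \<union>
     (if (i - 1, j) \<in> P \<or> (i - 1, j - 1) \<in> P then {(i - 1, j)} else {}) \<union>
     (if (i, j) \<in> P \<or> (i - 1, j) \<in> P then {(i, j + 1)} else {}) \<union>
     (if (i, j - 1) \<in> P \<or> (i - 1, j - 1) \<in> P then {(i, j - 1)} else {})"
    unfolding unit_edges_at_def Let_def by auto
  then show ?thesis
    unfolding vdegree_def by (auto simp: card_insert_if)
qed

lemma boundary_vertices_degree_in:
  "{v \<in> vertices P. \<not> interior_vertex P v \<and> vdegree P v \<in> M} =
     corner_pattern_vertices (boundary_degree_in M) P"
proof -
  have "(i, j) \<in> vertices P \<longleftrightarrow>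
      (i - 1, j - 1) \<in> P \<or> (i - 1, j) \<in> P \<or> (i, j - 1) \<in> P \<or> (i, j) \<in> P"
    "interior_vertex P (i, j) \<longleftrightarrow>
      (i - 1, j - 1) \<in> P \<and> (i - 1, j) \<in> P \<and> (i, j - 1) \<in> P \<and> (i, j) \<in> P" for i j
    unfolding vertices_def interior_vertex_def corner_cells_def by auto
  then show ?thesis
    unfolding corner_pattern_vertices_def boundary_degree_in_def
    by (intro set_eqI) (clarsimp simp: vdegree_eq)
qed

lemma corner_pattern_vertices_subset_vertices:
  assumes "\<not> pat False False False False"
  shows "corner_pattern_vertices pat P \<subseteq> vertices P"
proof clarify
  fix i j assume ij: "(i, j) \<in> corner_pattern_vertices pat P"
  show "(i, j) \<in> vertices P"
  proof (rule ccontr)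
    assume "(i, j) \<notin> vertices P"
    then have "(i - 1, j - 1) \<notin> P" "(i - 1, j) \<notin> P" "(i, j - 1) \<notin> P" "(i, j) \<notin> P"
      by (auto simp: vertices_def corner_cells_def)
    with ij assms show False
      by (simp add: corner_pattern_vertices_def)
  qed
qed

lemma finite_vertices:
  assumes "finite P"
  shows "finite (vertices P)"
proof -
  have "vertices P \<subseteq> (\<Union>(a, b)\<in>P. {a, a + 1} \<times> {b, b + 1})"
  proof
    fix v assume "v \<in> vertices P"
    then obtain c where "c \<in> corner_cells v" "c \<in> P" unfolding vertices_def by auto
    then show "v \<in> (\<Union>(a, b)\<in>P. {a, a + 1} \<times> {b, b + 1})"
      by (cases v) (auto simp: corner_cells_def intro!: bexI[of _ c])
  qed
  then show ?thesis
    by (rule finite_subset) (use assms in auto)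
qed

lemma d_eq_card: "d m P = card (corner_pattern_vertices (boundary_degree_in {m}) P)"
  unfolding d_def boundary_vertices_degree_in[symmetric] by simp

lemma d2_plus_d3_eq_card:
  assumes "finite P"
  shows "d 2 P + d 3 P = card (corner_pattern_vertices (boundary_degree_in {2, 3}) P)"
proof -
  let ?V = "\<lambda>M. {v \<in> vertices P. \<not> interior_vertex P v \<and> vdegree P v \<in> M}"
  have "?V {2, 3} = ?V {2} \<union> ?V {3}" by auto
  then have "card (?V {2, 3}) = card (?V {2}) + card (?V {3})"
    using finite_vertices[OF assms] by (simp add: card_Un_disjoint disjoint_iff)
  then show ?thesis
    unfolding d_def boundary_vertices_degree_in[symmetric] by simp
qed

definition column_cells :: "nat \<Rightarrow> (nat \<Rightarrow> int) \<Rightarrow> (nat \<Rightarrow> int) \<Rightarrow> cell set" where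
  "column_cells w b t = {(int i, j) | i j. i < w \<and> b i \<le> j \<and> j \<le> t i}"

lemma mem_column_cells:
  "(x, j) \<in> column_cells w b t \<longleftrightarrow> 0 \<le> x \<and> x < int w \<and> b (nat x) \<le> j \<and> j \<le> t (nat x)"
  unfolding column_cells_def by force

lemma nat_one_plus_int [simp]: "nat (1 + int k) = Suc k"
  by simp

lemma finite_column_cells: "finite (column_cells w b t)"
proof -
  have "column_cells w b t \<subseteq> (\<Union>i<w. {int i} \<times> {b i..t i})"
    unfolding column_cells_def by auto
  then show ?thesis
    by (rule finite_subset) auto
qed

text \<open>The number of vertices of pattern \<open>pat\<close> on the vertical line separating a column
  whose cells have heights \<open>I\<close> from the next column, whose cells have heights \<open>J\<close>.\<close>

definition line_count :: "(bool \<Rightarrow> bool \<Rightarrow> bool \<Rightarrow> bool \<Rightarrow> bool) \<Rightarrow> int set \<Rightarrow> int set \<Rightarrow> nat" where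
  "line_count pat I J = card {j. pat (j - 1 \<in> I) (j \<in> I) (j - 1 \<in> J) (j \<in> J)}"

lemma card_eq_sum_card_fibres:
  assumes "finite S" "finite X" "fst ` S \<subseteq> X"
  shows "card S = (\<Sum>x\<in>X. card {y. (x, y) \<in> S})"
proof -
  have "S = Sigma X (\<lambda>x. {y. (x, y) \<in> S})"
    using assms(3) by force
  moreover have "finite {y. (x, y) \<in> S}" for x
    using finite_imageI[OF assms(1), of snd] by (rule finite_subset[rotated]) force
  ultimately show ?thesis
    using assms(2) by (metis card_SigmaI)
qed

lemma card_corner_pattern_vertices_column_cells:
  assumes pat: "\<not> pat False False False False"
  shows "card (corner_pattern_vertices pat (column_cells (Suc m) b t)) =
    line_count pat {} {b 0..t 0} + line_count pat {b m..t m} {} +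
    (\<Sum>k<m. line_count pat {b k..t k} {b (Suc k)..t (Suc k)})"
proof -
  define w where "w = Suc m"
  let ?P = "column_cells w b t"
  let ?V = "corner_pattern_vertices pat ?P"
  define C where "C i = (if i < w then {b i..t i} else {})" for i
  define g where "g i = line_count pat (if i = 0 then {} else C (i - 1)) (C i)" for i
  have finV: "finite ?V"
    by (rule finite_subset[OF corner_pattern_vertices_subset_vertices[of pat, OF pat]
          finite_vertices[OF finite_column_cells]])
  have fstV: "fst ` ?V \<subseteq> int ` {..w}"
  proof (rule image_subsetI)
    fix v assume "v \<in> ?V"
    then have "v \<in> vertices ?P"
      using corner_pattern_vertices_subset_vertices[of pat, OF pat] by blast
    then have "0 \<le> fst v \<and> fst v \<le> int w"
      by (cases v) (auto simp: vertices_def corner_cells_def mem_column_cells)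
    then show "fst v \<in> int ` {..w}"
      by (auto intro!: image_eqI[where x = "nat (fst v)"])
  qed
  have "card ?V = (\<Sum>x\<in>int ` {..w}. card {j. (x, j) \<in> ?V})"
    using card_eq_sum_card_fibres[OF finV _ fstV] by simp
  also have "\<dots> = (\<Sum>i\<le>w. card {j. (int i, j) \<in> ?V})"
    by (simp add: sum.reindex)
  also have "\<dots> = (\<Sum>i\<le>w. g i)"
  proof (rule sum.cong[OF refl])
    fix i
    have "(int i - 1, j) \<in> ?P \<longleftrightarrow> i \<noteq> 0 \<and> j \<in> C (i - 1)" for j
      by (cases i) (auto simp: mem_column_cells C_def w_def)
    moreover have "(int i, j) \<in> ?P \<longleftrightarrow> j \<in> C i" for j
      by (auto simp: mem_column_cells C_def)
    ultimately show "card {j. (int i, j) \<in> ?V} = g i"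
      by (simp add: g_def line_count_def corner_pattern_vertices_def)
  qed
  also have "\<dots> = g 0 + (\<Sum>k<m. g (Suc k)) + g (Suc m)"
    unfolding w_def sum.atMost_Suc_shift by (simp add: lessThan_Suc_atMost[symmetric])
  finally show ?thesis
    by (simp add: g_def C_def w_def)
qed

definition step_cost :: "int \<Rightarrow> nat" where
  "step_cost z = max 1 (nat \<bar>z\<bar>)"

lemma step_cost_ge: "1 \<le> step_cost z" "\<bar>z\<bar> \<le> int (step_cost z)"
  unfolding step_cost_def by auto

lemma boundary_degree_23_iff:
  "boundary_degree_in {2, 3} A B C D \<longleftrightarrow>
    (A \<and> \<not> B \<and> \<not> C \<and> \<not> D) \<or> (\<not> A \<and> B \<and> \<not> C \<and> \<not> D) \<or>
    (\<not> A \<and> \<not> B \<and> C \<and> \<not> D) \<or> (\<not> A \<and> \<not> B \<and> \<not> C \<and> D) \<or>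
    (A \<and> B \<and> \<not> C \<and> \<not> D) \<or> (\<not> A \<and> \<not> B \<and> C \<and> D) \<or>
    (A \<and> \<not> B \<and> C \<and> \<not> D) \<or> (\<not> A \<and> B \<and> \<not> C \<and> D)"
  by (cases A; cases B; cases C; cases D) (simp_all add: boundary_degree_in_def)

lemma boundary_degree_4_iff:
  "boundary_degree_in {4} A B C D \<longleftrightarrow>
    (\<not> A \<and> B \<and> C \<and> D) \<or> (A \<and> \<not> B \<and> C \<and> D) \<or> (A \<and> B \<and> \<not> C \<and> D) \<or>
    (A \<and> B \<and> C \<and> \<not> D) \<or> (A \<and> \<not> B \<and> \<not> C \<and> D) \<or> (\<not> A \<and> B \<and> C \<and> \<not> D)"
  by (cases A; cases B; cases C; cases D) (simp_all add: boundary_degree_in_def)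

lemma line_count_degree_23:
  fixes p q p' q' :: int
  assumes "p \<le> q" "p' \<le> q'" "p' \<le> q" "p \<le> q'"
  shows "line_count (boundary_degree_in {2, 3}) {p..q} {p'..q'} = step_cost (q' - q) + step_cost (p' - p)"
proof -
  \<comment> \<open>the vertices on the lower and on the upper boundary\<close>
  let ?B = "if p = p' then {p} else {min p p'..max p p' - 1}"
  let ?T = "if q = q' then {q + 1} else {min q q' + 2..max q q' + 1}"
  have "{j. boundary_degree_in {2, 3} (j - 1 \<in> {p..q}) (j \<in> {p..q}) (j - 1 \<in> {p'..q'}) (j \<in> {p'..q'})}
      = ?B \<union> ?T"
    using assms unfolding boundary_degree_23_iff
    by (cases "p = p'"; cases "q = q'"; simp add: set_eq_iff; smt)
  then have "line_count (boundary_degree_in {2, 3}) {p..q} {p'..q'} = card (?B \<union> ?T)"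
    unfolding line_count_def by (rule arg_cong)
  also have "\<dots> = card ?B + card ?T"
    by (rule card_Un_disjoint) (use assms in auto)
  also have "\<dots> = step_cost (q' - q) + step_cost (p' - p)"
    by (auto simp: step_cost_def min_def max_def abs_if)
  finally show ?thesis .
qed

lemma line_count_degree_4:
  fixes p q p' q' :: int
  assumes "p \<le> q" "p' \<le> q'" "p' \<le> q" "p \<le> q'"
  shows "line_count (boundary_degree_in {4}) {p..q} {p'..q'} = of_bool (q' \<noteq> q) + of_bool (p' \<noteq> p)"
proof -
  let ?B = "if p = p' then {} else {max p p'}"
  let ?T = "if q = q' then {} else {min q q' + 1}"
  have "{j. boundary_degree_in {4} (j - 1 \<in> {p..q}) (j \<in> {p..q}) (j - 1 \<in> {p'..q'}) (j \<in> {p'..q'})}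
      = ?B \<union> ?T"
    using assms unfolding boundary_degree_4_iff
    by (cases "p = p'"; cases "q = q'"; simp add: set_eq_iff; smt)
  then have "line_count (boundary_degree_in {4}) {p..q} {p'..q'} = card (?B \<union> ?T)"
    unfolding line_count_def by (rule arg_cong)
  also have "\<dots> = card ?B + card ?T"
    by (rule card_Un_disjoint) (use assms in auto)
  also have "\<dots> = of_bool (q' \<noteq> q) + of_bool (p' \<noteq> p)"
    by auto
  finally show ?thesis .
qed

lemma line_count_degree_23_ends:
  fixes p q :: int
  assumes "p \<le> q"
  shows "line_count (boundary_degree_in {2, 3}) {} {p..q} = nat (q - p + 2)"
    and "line_count (boundary_degree_in {2, 3}) {p..q} {} = nat (q - p + 2)"
proof -
  have "{j. boundary_degree_in {2, 3} False False (j - 1 \<in> {p..q}) (j \<in> {p..q})} = {p..q + 1}"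
    using assms unfolding boundary_degree_23_iff by (auto; smt)
  moreover have "{j. boundary_degree_in {2, 3} (j - 1 \<in> {p..q}) (j \<in> {p..q}) False False} = {p..q + 1}"
    using assms unfolding boundary_degree_23_iff by (auto; smt)
  ultimately show "line_count (boundary_degree_in {2, 3}) {} {p..q} = nat (q - p + 2)"
      and "line_count (boundary_degree_in {2, 3}) {p..q} {} = nat (q - p + 2)"
    unfolding line_count_def by simp_all
qed

lemma line_count_degree_4_ends:
  "line_count (boundary_degree_in {4}) {} I = 0" "line_count (boundary_degree_in {4}) I {} = 0"
  unfolding line_count_def boundary_degree_4_iff by simp_all

definition overlapping_columns :: "nat \<Rightarrow> (nat \<Rightarrow> int) \<Rightarrow> (nat \<Rightarrow> int) \<Rightarrow> bool" where
  "overlapping_columns w b t \<longleftrightarrow> 1 \<le> w \<and> (\<forall>i<w. b i \<le> t i) \<and>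
     (\<forall>k. Suc k < w \<longrightarrow> b (Suc k) \<le> t k \<and> b k \<le> t (Suc k))"

lemma d2_plus_d3_column_cells:
  assumes "overlapping_columns w b t"
  shows "d 2 (column_cells w b t) + d 3 (column_cells w b t) =
    nat (t 0 - b 0 + 2) + nat (t (w - 1) - b (w - 1) + 2) +
    (\<Sum>k<w - 1. step_cost (t (Suc k) - t k) + step_cost (b (Suc k) - b k))"
proof -
  obtain m where w: "w = Suc m"
    using assms unfolding overlapping_columns_def by (cases w) auto
  have "line_count (boundary_degree_in {2, 3}) {b k..t k} {b (Suc k)..t (Suc k)} =
      step_cost (t (Suc k) - t k) + step_cost (b (Suc k) - b k)" if "k < m" for k
    using assms that unfolding overlapping_columns_def w by (intro line_count_degree_23) auto
  moreover have "b 0 \<le> t 0" "b m \<le> t m"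
    using assms unfolding overlapping_columns_def w by auto
  ultimately show ?thesis
    unfolding d2_plus_d3_eq_card[OF finite_column_cells] w
    by (simp add: card_corner_pattern_vertices_column_cells boundary_degree_in_def
        line_count_degree_23_ends)
qed

lemma d4_column_cells:
  assumes "overlapping_columns w b t"
  shows "d 4 (column_cells w b t) =
    (\<Sum>k<w - 1. of_bool (t (Suc k) \<noteq> t k) + of_bool (b (Suc k) \<noteq> b k))"
proof -
  obtain m where w: "w = Suc m"
    using assms unfolding overlapping_columns_def by (cases w) auto
  have "line_count (boundary_degree_in {4}) {b k..t k} {b (Suc k)..t (Suc k)} =
      of_bool (t (Suc k) \<noteq> t k) + of_bool (b (Suc k) \<noteq> b k)" if "k < m" for k
    using assms that unfolding overlapping_columns_def w by (intro line_count_degree_4) auto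
  then show ?thesis
    unfolding d_eq_card w
    by (simp add: card_corner_pattern_vertices_column_cells boundary_degree_in_def
        line_count_degree_4_ends)
qed

section \<open>Convex polyominoes as sequences of columns\<close>

definition row_convex :: "cell set \<Rightarrow> bool" where
  "row_convex P \<longleftrightarrow>
     (\<forall>y x1 x2 x. (x1, y) \<in> P \<longrightarrow> (x2, y) \<in> P \<longrightarrow> x1 \<le> x \<longrightarrow> x \<le> x2 \<longrightarrow> (x, y) \<in> P)"

definition column_convex :: "cell set \<Rightarrow> bool" where
  "column_convex P \<longleftrightarrow>
     (\<forall>x y1 y2 y. (x, y1) \<in> P \<longrightarrow> (x, y2) \<in> P \<longrightarrow> y1 \<le> y \<longrightarrow> y \<le> y2 \<longrightarrow> (x, y) \<in> P)"

lemma convex_polyomino_iff: "convex_polyomino P \<longleftrightarrow> polyomino P \<and> row_convex P \<and> column_convex P"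
  unfolding convex_polyomino_def row_convex_def column_convex_def ..

definition adjacency :: "cell set \<Rightarrow> (cell \<times> cell) set" where
  "adjacency P = {(a, b). a \<in> P \<and> b \<in> P \<and> edge_adj a b}"

lemma polyomino_iff_adjacency:
  "polyomino P \<longleftrightarrow> finite P \<and> P \<noteq> {} \<and> (\<forall>c\<in>P. \<forall>e\<in>P. (c, e) \<in> (adjacency P)\<^sup>*)"
  unfolding polyomino_def adjacency_def ..

lemma sym_adjacency: "sym (adjacency P)"
  unfolding adjacency_def edge_adj_def sym_def by (auto simp: abs_minus_commute)

definition quasiconcave_upto :: "nat \<Rightarrow> (nat \<Rightarrow> int) \<Rightarrow> bool" where
  "quasiconcave_upto w f \<longleftrightarrow> (\<forall>i j k. i \<le> j \<longrightarrow> j \<le> k \<longrightarrow> k < w \<longrightarrow> min (f i) (f k) \<le> f j)"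

lemma adjacency_path_crosses:
  assumes "(c, e) \<in> (adjacency P)\<^sup>*" "fst c \<le> x" "x < fst e"
  shows "\<exists>y. (x, y) \<in> P \<and> (x + 1, y) \<in> P"
  using assms
proof (induction e rule: rtrancl_induct)
  case (step e e')
  show ?case
  proof (cases "fst e \<le> x")
    case True
    from step.hyps(2) have "e \<in> P" "e' \<in> P" "\<bar>fst e - fst e'\<bar> + \<bar>snd e - snd e'\<bar> = 1"
      unfolding adjacency_def edge_adj_def by auto
    with True step.prems(2) have "e = (x, snd e)" "e' = (x + 1, snd e)"
      by (auto simp: prod_eq_iff)
    then show ?thesis
      using \<open>e \<in> P\<close> \<open>e' \<in> P\<close> by metis
  next
    case False
    then show ?thesis
      using step by auto
  qed
qed simp

lemma polyomino_crosses:
  assumes "polyomino P" "(x1, y1) \<in> P" "(x2, y2) \<in> P" "x1 \<le> x" "x < x2"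
  shows "\<exists>y. (x, y) \<in> P \<and> (x + 1, y) \<in> P"
  using assms polyomino_iff_adjacency adjacency_path_crosses[of "(x1, y1)" "(x2, y2)"] by force

lemma nat_predicate_switches:
  fixes Q :: "nat \<Rightarrow> bool"
  assumes "Q i" "\<not> Q j" "i \<le> j"
  shows "\<exists>k. i \<le> k \<and> k < j \<and> Q k \<and> \<not> Q (Suc k)"
  using assms
proof (induction j)
  case (Suc j)
  show ?case
  proof (cases "Q j")
    case True
    then show ?thesis
      using Suc.prems by (intro exI[of _ j]) (auto simp: le_Suc_eq)
  next
    case False
    then have "i \<le> j"
      using Suc.prems by (metis le_SucE)
    with Suc.IH[OF Suc.prems(1) False] show ?thesis
      by auto
  qed
qed simp

lemma quasiconcave_top_if_row_convex:
  assumes ov: "overlapping_columns w b t" and rc: "row_convex (column_cells w b t)"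
  shows "quasiconcave_upto w t"
  unfolding quasiconcave_upto_def
proof (intro allI impI, rule ccontr)
  fix i j k assume ij: "i \<le> j" and jk: "j \<le> k" and kw: "k < w" and "\<not> min (t i) (t k) \<le> t j"
  define r where "r = t j + 1"
  have ri: "r \<le> t i" and rk: "r \<le> t k" and rj: "\<not> r \<le> t j"
    using \<open>\<not> min (t i) (t k) \<le> t j\<close> by (auto simp: r_def)
  have ov': "b (Suc l) \<le> t l \<and> b l \<le> t (Suc l)" if "Suc l < w" for l
    using ov that unfolding overlapping_columns_def by blast
  obtain i' where i': "i \<le> i'" "i' < j" "r \<le> t i'" "\<not> r \<le> t (Suc i')"
    using nat_predicate_switches[of "\<lambda>x. r \<le> t x", OF ri rj ij] by auto
  obtain k' where k': "j \<le> k'" "k' < k" "\<not> r \<le> t k'" "r \<le> t (Suc k')"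
    using nat_predicate_switches[of "\<lambda>x. \<not> r \<le> t x", OF rj _ jk] rk by auto
  \<comment> \<open>the row at height \<open>r\<close> meets the columns \<open>i'\<close> and \<open>Suc k'\<close> but not the column \<open>j\<close>\<close>
  have "b i' \<le> t (Suc i')"
    using ov'[of i'] i' jk kw by auto
  then have left: "(int i', r) \<in> column_cells w b t"
    using i' jk kw unfolding mem_column_cells by auto
  have "b (Suc k') \<le> t k'"
    using ov'[of k'] k' kw by auto
  then have right: "(int (Suc k'), r) \<in> column_cells w b t"
    using k' kw unfolding mem_column_cells by auto
  have "(int j, r) \<in> column_cells w b t"
    using rc left right i' k' unfolding row_convex_def by (meson le_SucI of_nat_le_iff less_imp_le)
  then show False
    using rj by (simp add: mem_column_cells)
qed

lemma mem_column_cells_reflect: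
  "(x, j) \<in> column_cells w (\<lambda>i. - t i) (\<lambda>i. - b i) \<longleftrightarrow> (x, - j) \<in> column_cells w b t"
  unfolding mem_column_cells by auto

lemma quasiconcave_neg_bottom_if_row_convex:
  assumes ov: "overlapping_columns w b t" and rc: "row_convex (column_cells w b t)"
  shows "quasiconcave_upto w (\<lambda>i. - b i)"
proof (rule quasiconcave_top_if_row_convex)
  show "overlapping_columns w (\<lambda>i. - t i) (\<lambda>i. - b i)"
    using ov unfolding overlapping_columns_def by auto
  show "row_convex (column_cells w (\<lambda>i. - t i) (\<lambda>i. - b i))"
    using rc unfolding row_convex_def mem_column_cells_reflect by blast
qed

lemma column_convex_eq_column_cells:
  fixes P :: "cell set"
  defines "col \<equiv> \<lambda>i. {j. (int i, j) \<in> P}"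
  assumes fin: "finite P" and cc: "column_convex P"
    and range: "\<And>x y. (x, y) \<in> P \<Longrightarrow> 0 \<le> x \<and> nat x < w" and ne: "\<And>i. i < w \<Longrightarrow> col i \<noteq> {}"
  shows "P = column_cells w (\<lambda>i. Min (col i)) (\<lambda>i. Max (col i))"
proof (rule set_eqI, clarify)
  have finite_col: "finite (col i)" for i
    using finite_imageI[OF fin, of snd] by (rule finite_subset[rotated]) (force simp: col_def)
  fix x j
  show "(x, j) \<in> P \<longleftrightarrow> (x, j) \<in> column_cells w (\<lambda>i. Min (col i)) (\<lambda>i. Max (col i))"
  proof
    assume xj: "(x, j) \<in> P"
    then have "0 \<le> x" "nat x < w"
      using range by auto
    moreover have "j \<in> col (nat x)"
      using xj \<open>0 \<le> x\<close> by (simp add: col_def)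
    ultimately show "(x, j) \<in> column_cells w (\<lambda>i. Min (col i)) (\<lambda>i. Max (col i))"
      using finite_col unfolding mem_column_cells by auto
  next
    assume x: "(x, j) \<in> column_cells w (\<lambda>i. Min (col i)) (\<lambda>i. Max (col i))"
    then have "0 \<le> x" "nat x < w"
      by (auto simp: mem_column_cells)
    then have "(x, Min (col (nat x))) \<in> P" "(x, Max (col (nat x))) \<in> P"
      using Min_in[OF finite_col ne[of "nat x"]] Max_in[OF finite_col ne[of "nat x"]]
      by (simp_all add: col_def)
    then show "(x, j) \<in> P"
      using cc x unfolding column_convex_def mem_column_cells by blast
  qed
qed

lemma column_representation:
  assumes poly: "polyomino P" and cc: "column_convex P"
    and pos: "\<forall>c\<in>P. 0 \<le> fst c" and zero: "\<exists>c\<in>P. fst c = 0"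
  obtains w b t where "P = column_cells w b t" "overlapping_columns w b t"
proof -
  define col where "col = (\<lambda>i. {j. (int i, j) \<in> P})"
  have fin: "finite P" and ne: "P \<noteq> {}"
    using poly unfolding polyomino_def by auto
  define M where "M = Max (fst ` P)"
  have "M \<in> fst ` P"
    using Max_in[of "fst ` P"] fin ne unfolding M_def by auto
  then obtain yM where yM: "(M, yM) \<in> P"
    by force
  have leM: "fst c \<le> M" if "c \<in> P" for c
    unfolding M_def using fin that by auto
  obtain y0 where y0: "(0, y0) \<in> P"
    using zero by force
  define w where "w = Suc (nat M)"
  have overlap: "\<exists>y. y \<in> col k \<and> y \<in> col (Suc k)" if "Suc k < w" for k
    using polyomino_crosses[OF poly y0 yM, of "int k"] that
    unfolding col_def w_def by (auto simp: add.commute)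
  have col_ne: "col i \<noteq> {}" if "i < w" for i
    using overlap[of i] overlap[of "i - 1"] that yM y0 leM[OF y0] unfolding w_def col_def
    by (cases "int i = M"; cases i) auto
  have "P = column_cells w (\<lambda>i. Min (col i)) (\<lambda>i. Max (col i))"
    unfolding col_def using pos leM col_ne unfolding col_def
    by (intro column_convex_eq_column_cells fin cc) (force simp: w_def)+
  moreover have "overlapping_columns w (\<lambda>i. Min (col i)) (\<lambda>i. Max (col i))"
  proof -
    have finite_col: "finite (col i)" for i
      using finite_imageI[OF fin, of snd] by (rule finite_subset[rotated]) (force simp: col_def)
    have "Min (col i) \<le> Max (col i)" if "i < w" for i
      using finite_col col_ne[OF that] by simp
    moreover have "Min (col (Suc k)) \<le> Max (col k) \<and> Min (col k) \<le> Max (col (Suc k))" if "Suc k < w" for k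
      using overlap[OF that] finite_col by (meson Max_ge Min_le order_trans)
    ultimately show ?thesis
      unfolding overlapping_columns_def w_def by simp
  qed
  ultimately show thesis
    using that by blast
qed

lemma convex_polyomino_columns:
  assumes "convex_polyomino P" and "normalized P"
  obtains w b t where "P = column_cells w b t" "overlapping_columns w b t"
    "\<forall>i<w. 0 \<le> b i" "\<exists>i<w. b i = 0" "quasiconcave_upto w t" "quasiconcave_upto w (\<lambda>i. - b i)"
proof -
  have pos: "0 \<le> x \<and> 0 \<le> y" if "(x, y) \<in> P" for x y
    using assms(2) that unfolding normalized_def by force
  obtain w b t where P: "P = column_cells w b t" and ov: "overlapping_columns w b t"
    using column_representation assms unfolding convex_polyomino_iff normalized_def by metis
  have "row_convex (column_cells w b t)"
    using assms(1) P unfolding convex_polyomino_iff by simp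
  moreover have "(int i, b i) \<in> P" if "i < w" for i
    using ov that unfolding P mem_column_cells overlapping_columns_def by auto
  moreover obtain x where "(x, 0) \<in> P"
    using assms(2) unfolding normalized_def by force
  then have "nat x < w \<and> b (nat x) \<le> 0"
    unfolding P mem_column_cells by auto
  ultimately show thesis
    using that P ov pos quasiconcave_top_if_row_convex quasiconcave_neg_bottom_if_row_convex
    by (metis order_antisym)
qed

lemma vertical_path:
  assumes "j \<le> j'" and "\<And>y. j \<le> y \<Longrightarrow> y \<le> j' \<Longrightarrow> (x, y) \<in> P"
  shows "((x, j), (x, j')) \<in> (adjacency P)\<^sup>*"
  using assms
proof (induction j' rule: int_ge_induct)
  case (step i)
  then have "((x, j), (x, i)) \<in> (adjacency P)\<^sup>*"
    by simp
  moreover have "((x, i), (x, i + 1)) \<in> adjacency P"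
    using step unfolding adjacency_def edge_adj_def by auto
  ultimately show ?case
    by (rule rtrancl_into_rtrancl)
qed simp

lemma column_cells_reachable:
  assumes ov: "overlapping_columns w b t" and "(int i, j) \<in> column_cells w b t"
  shows "((0, b 0), (int i, j)) \<in> (adjacency (column_cells w b t))\<^sup>*"
  using assms(2)
proof (induction i arbitrary: j)
  case 0
  then have "b 0 \<le> j" "\<And>y. b 0 \<le> y \<Longrightarrow> y \<le> j \<Longrightarrow> (0, y) \<in> column_cells w b t"
    by (auto simp: mem_column_cells)
  then show ?case
    using vertical_path[of "b 0" j 0] by simp
next
  case (Suc k)
  let ?A = "(adjacency (column_cells w b t))\<^sup>*"
  define y where "y = max (b k) (b (Suc k))"
  have k: "Suc k < w" "b (Suc k) \<le> j" "j \<le> t (Suc k)"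
    using Suc.prems by (auto simp: mem_column_cells)
  then have y: "b k \<le> y" "y \<le> t k" "b (Suc k) \<le> y" "y \<le> t (Suc k)"
    using ov unfolding overlapping_columns_def y_def by auto
  have "((0, b 0), (int k, y)) \<in> ?A"
    using k y by (intro Suc.IH) (auto simp: mem_column_cells)
  moreover have "((int k, y), (int (Suc k), y)) \<in> adjacency (column_cells w b t)"
    using k y unfolding adjacency_def edge_adj_def by (auto simp: mem_column_cells)
  moreover have "((int (Suc k), y), (int (Suc k), j)) \<in> ?A"
  proof (cases "y \<le> j")
    case True
    then show ?thesis
      using k y by (intro vertical_path) (auto simp: mem_column_cells)
  next
    case False
    then have "((int (Suc k), j), (int (Suc k), y)) \<in> ?A"
      using k y by (intro vertical_path) (auto simp: mem_column_cells)
    then show ?thesis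
      using sym_adjacency by (metis rtrancl_converseI sym_conv_converse_eq)
  qed
  ultimately show ?case
    by (meson rtrancl_into_rtrancl rtrancl_trans)
qed

lemma polyomino_column_cells:
  assumes ov: "overlapping_columns w b t"
  shows "polyomino (column_cells w b t)"
proof -
  let ?P = "column_cells w b t"
  have "(0, b 0) \<in> ?P"
    using ov unfolding overlapping_columns_def by (auto simp: mem_column_cells)
  moreover have "(c, e) \<in> (adjacency ?P)\<^sup>*" if "c \<in> ?P" "e \<in> ?P" for c e
  proof -
    have "((0, b 0), c) \<in> (adjacency ?P)\<^sup>*" "((0, b 0), e) \<in> (adjacency ?P)\<^sup>*"
      using that column_cells_reachable[OF ov] unfolding column_cells_def by auto
    then show ?thesis
      using sym_adjacency by (metis rtrancl_converseI rtrancl_trans sym_conv_converse_eq)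
  qed
  ultimately show ?thesis
    unfolding polyomino_iff_adjacency using finite_column_cells by blast
qed

lemma convex_polyomino_column_cells:
  assumes ov: "overlapping_columns w b t"
    and top: "quasiconcave_upto w t" and bot: "quasiconcave_upto w (\<lambda>i. - b i)"
  shows "convex_polyomino (column_cells w b t)"
  unfolding convex_polyomino_iff
proof (intro conjI polyomino_column_cells[OF ov])
  show "row_convex (column_cells w b t)"
    unfolding row_convex_def
  proof (intro allI impI)
    fix y x1 x2 x
    assume x1: "(x1, y) \<in> column_cells w b t" and x2: "(x2, y) \<in> column_cells w b t"
      and x: "x1 \<le> x" "x \<le> x2"
    then have "nat x1 \<le> nat x" "nat x \<le> nat x2" "nat x2 < w"
      by (auto simp: mem_column_cells)
    then have "min (t (nat x1)) (t (nat x2)) \<le> t (nat x)"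
      "min (- b (nat x1)) (- b (nat x2)) \<le> - b (nat x)"
      using top bot unfolding quasiconcave_upto_def by blast+
    with x1 x2 x show "(x, y) \<in> column_cells w b t"
      unfolding mem_column_cells by (auto simp: min_def split: if_splits)
  qed
  show "column_convex (column_cells w b t)"
    unfolding column_convex_def mem_column_cells by auto
qed

lemma normalized_column_cells:
  assumes ov: "overlapping_columns w b t" and "\<forall>i<w. 0 \<le> b i" "\<exists>i<w. b i = 0"
  shows "normalized (column_cells w b t)"
proof -
  obtain i where i: "i < w" "b i = 0"
    using assms by auto
  then have "(int i, 0) \<in> column_cells w b t"
    using ov unfolding overlapping_columns_def by (auto simp: mem_column_cells)
  moreover have "(0, b 0) \<in> column_cells w b t"
    using ov unfolding overlapping_columns_def by (auto simp: mem_column_cells)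
  moreover have "\<forall>c\<in>column_cells w b t. 0 \<le> fst c \<and> 0 \<le> snd c"
    using assms(2) unfolding column_cells_def by force
  ultimately show ?thesis
    unfolding normalized_def by force
qed

section \<open>An upper bound for the weighted count\<close>

lemma sum_prod_list_lists_length:
  fixes f :: "'a \<Rightarrow> real"
  assumes "finite A"
  shows "(\<Sum>l\<in>{l. set l \<subseteq> A \<and> length l = m}. prod_list (map f l)) = (\<Sum>a\<in>A. f a) ^ m"
proof (induction m)
  case 0
  have "{l. set l \<subseteq> A \<and> length l = 0} = {[]}"
    by auto
  then show ?case
    by simp
next
  case (Suc m)
  let ?L = "{l. set l \<subseteq> A \<and> length l = m}"
  have "(\<Sum>l\<in>{l. set l \<subseteq> A \<and> length l = Suc m}. prod_list (map f l)) =
      (\<Sum>(l, a)\<in>?L \<times> A. f a * prod_list (map f l))"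
    unfolding lists_length_Suc_eq by (subst sum.reindex) (auto simp: inj_on_def split_def)
  also have "\<dots> = (\<Sum>a\<in>A. f a) * (\<Sum>l\<in>?L. prod_list (map f l))"
    by (simp add: sum.cartesian_product[symmetric] sum_product sum.swap[of _ A] mult.commute)
  finally show ?case
    using Suc.IH by simp
qed

text \<open>For \<open>s = 1\<close> these are the successive differences of a quasiconcave sequence, for
  \<open>s = -1\<close> those of a quasiconvex one.\<close>

definition unimodal_step_lists :: "int \<Rightarrow> int \<Rightarrow> nat \<Rightarrow> int list set" where
  "unimodal_step_lists s n m = {l. length l = m \<and> (\<forall>x\<in>set l. \<bar>x\<bar> \<le> n) \<and>
     (\<exists>p\<le>m. (\<forall>k<p. 0 \<le> s * l ! k) \<and> (\<forall>k. p \<le> k \<longrightarrow> k < m \<longrightarrow> s * l ! k \<le> 0))}"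

lemma finite_unimodal_step_lists: "finite (unimodal_step_lists s n m)"
  by (rule finite_subset[OF _ finite_lists_length_eq[of "{-n..n}" m]])
    (auto simp: unimodal_step_lists_def abs_le_iff)

lemma sum_unimodal_step_lists_le:
  fixes f :: "int \<Rightarrow> real" and s n :: int
  defines "A \<equiv> {x. \<bar>x\<bar> \<le> n \<and> 0 \<le> s * x}" and "B \<equiv> {x. \<bar>x\<bar> \<le> n \<and> s * x \<le> 0}"
  assumes f: "\<And>x. 0 \<le> f x" and A: "(\<Sum>x\<in>A. f x) \<le> 1" and B: "(\<Sum>x\<in>B. f x) \<le> 1"
  shows "(\<Sum>l\<in>unimodal_step_lists s n m. prod_list (map f l)) \<le> real m + 1"
proof -
  let ?F = "\<lambda>l. prod_list (map f l)"
  let ?L = "\<lambda>C k. {l. set l \<subseteq> C \<and> length l = k}"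
  let ?S = "SIGMA p:{..m}. ?L A p \<times> ?L B (m - p)"
  have "A \<subseteq> {-n..n}" "B \<subseteq> {-n..n}"
    unfolding A_def B_def by auto
  then have finite: "finite A" "finite B"
    by (auto intro: finite_subset)
  have F: "0 \<le> ?F l" for l
    using f by (induction l) auto
  have "unimodal_step_lists s n m \<subseteq> (\<lambda>(p, l1, l2). l1 @ l2) ` ?S"
  proof
    fix l assume "l \<in> unimodal_step_lists s n m"
    then obtain p where l: "length l = m" "\<forall>x\<in>set l. \<bar>x\<bar> \<le> n" "p \<le> m" "\<forall>k<p. 0 \<le> s * l ! k"
      "\<forall>k. p \<le> k \<longrightarrow> k < m \<longrightarrow> s * l ! k \<le> 0"
      unfolding unimodal_step_lists_def by auto
    then have "(p, take p l, drop p l) \<in> ?S"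
      by (auto simp: A_def B_def in_set_conv_nth dest: in_set_takeD in_set_dropD)
    then show "l \<in> (\<lambda>(p, l1, l2). l1 @ l2) ` ?S"
      by (intro image_eqI[where x = "(p, take p l, drop p l)"]) auto
  qed
  then have "(\<Sum>l\<in>unimodal_step_lists s n m. ?F l) \<le> (\<Sum>l\<in>(\<lambda>(p, l1, l2). l1 @ l2) ` ?S. ?F l)"
    using finite by (intro sum_mono2) (auto simp: finite_lists_length_eq F)
  also have "\<dots> \<le> (\<Sum>(p, l1, l2)\<in>?S. ?F l1 * ?F l2)"
    using sum_image_le[of ?S ?F "\<lambda>(p, l1, l2). l1 @ l2"] finite F
    by (simp add: finite_lists_length_eq split_def)
  also have "\<dots> = (\<Sum>p\<le>m. \<Sum>(l1, l2)\<in>?L A p \<times> ?L B (m - p). ?F l1 * ?F l2)"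
    by (rule sum.Sigma[symmetric]) (use finite in \<open>auto simp: finite_lists_length_eq\<close>)
  also have "\<dots> = (\<Sum>p\<le>m. (\<Sum>l1\<in>?L A p. ?F l1) * (\<Sum>l2\<in>?L B (m - p). ?F l2))"
    by (simp add: sum_product sum.cartesian_product)
  also have "\<dots> = (\<Sum>p\<le>m. (\<Sum>x\<in>A. f x) ^ p * (\<Sum>x\<in>B. f x) ^ (m - p))"
    using finite by (simp add: sum_prod_list_lists_length)
  also have "\<dots> \<le> (\<Sum>p\<le>m. 1)"
    using A B f by (intro sum_mono mult_le_one power_le_one) (auto intro: sum_nonneg zero_le_power)
  finally show ?thesis
    by simp
qed

definition step_weight :: "real \<Rightarrow> real \<Rightarrow> int \<Rightarrow> real" where
  "step_weight x y z = x ^ step_cost z * y ^ of_bool (z \<noteq> 0)"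

lemma step_weight_nonneg: "0 \<le> x \<Longrightarrow> 0 \<le> y \<Longrightarrow> 0 \<le> step_weight x y z"
  unfolding step_weight_def by simp

lemma sum_step_weight_le_1:
  assumes x: "0 < x" "x < 1" and y: "0 < y" and xy: "x + y * x / (1 - x) \<le> 1"
  shows "(\<Sum>z\<in>{0..n}. step_weight x y z) \<le> 1"
proof (cases "0 \<le> n")
  case True
  have "(\<Sum>z\<in>{1..n}. step_weight x y z) = (\<Sum>k\<in>{1..nat n}. y * x ^ k)"
  proof -
    have "{1..n} = int ` {1..nat n}"
      using True by (simp add: image_int_atLeastAtMost)
    then show ?thesis
      by (simp add: sum.reindex step_weight_def step_cost_def mult.commute)
  qed
  also have "\<dots> = y * x * (\<Sum>k<nat n. x ^ k)"
    by (simp add: sum_distrib_left sum.atLeast1_atMost_eq mult.assoc)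
  also have "\<dots> \<le> y * x / (1 - x)"
    using x y by (simp add: geometric_sum divide_right_mono field_simps)
  finally have "(\<Sum>z\<in>{1..n}. step_weight x y z) \<le> y * x / (1 - x)" .
  moreover have "{0..n} = insert 0 {1..n}"
    using True by auto
  ultimately show ?thesis
    using xy by (simp add: step_weight_def step_cost_def)
qed simp

lemma sum_step_weight_signed_le_1:
  assumes "0 < x" "x < 1" "0 < y" "x + y * x / (1 - x) \<le> 1" and s: "s = 1 \<or> s = -1"
  shows "(\<Sum>z\<in>{z. \<bar>z\<bar> \<le> n \<and> 0 \<le> s * z}. step_weight x y z) \<le> 1"
    and "(\<Sum>z\<in>{z. \<bar>z\<bar> \<le> n \<and> s * z \<le> 0}. step_weight x y z) \<le> 1"
proof -
  have "{z. \<bar>z\<bar> \<le> n \<and> z \<le> 0} = uminus ` {0..n}"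
    by (auto simp: image_iff intro!: bexI[of _ "- _"])
  moreover have "(\<Sum>z\<in>uminus ` {0..n}. step_weight x y z) = (\<Sum>z\<in>{0..n}. step_weight x y z)"
    by (subst sum.reindex) (auto simp: step_weight_def step_cost_def)
  moreover have "{z. \<bar>z\<bar> \<le> n \<and> 0 \<le> z} = {0..n}"
    by auto
  ultimately show "(\<Sum>z\<in>{z. \<bar>z\<bar> \<le> n \<and> 0 \<le> s * z}. step_weight x y z) \<le> 1"
    and "(\<Sum>z\<in>{z. \<bar>z\<bar> \<le> n \<and> s * z \<le> 0}. step_weight x y z) \<le> 1"
    using s sum_step_weight_le_1[OF assms(1-4), of n] by (auto simp: neg_0_le_iff_le neg_le_0_iff_le)
qed

definition prefix_sum :: "int \<Rightarrow> int list \<Rightarrow> nat \<Rightarrow> int" where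
  "prefix_sum a l i = a + sum_list (take i l)"

definition diffs :: "(nat \<Rightarrow> int) \<Rightarrow> nat \<Rightarrow> int list" where
  "diffs f m = map (\<lambda>k. f (Suc k) - f k) [0..<m]"

lemma length_diffs [simp]: "length (diffs f m) = m"
  by (simp add: diffs_def)

lemma prefix_sum_diffs:
  assumes "i \<le> m"
  shows "prefix_sum (f 0) (diffs f m) i = f i"
proof -
  have "take i (diffs f m) = map (\<lambda>k. f (Suc k) - f k) [0..<i]"
    using assms by (simp add: diffs_def take_map min_absorb1)
  then show ?thesis
    by (simp add: prefix_sum_def interv_sum_list_conv_sum_set_nat atLeast0LessThan
        sum_lessThan_telescope)
qed

text \<open>A code \<open>(b0, t0, lt, lb)\<close> gives the bottom and top of the first column and the
  successive changes of the tops and of the bottoms.\<close>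

definition polyomino_of_code :: "int \<times> int \<times> int list \<times> int list \<Rightarrow> cell set" where
  "polyomino_of_code = (\<lambda>(b0, t0, lt, lb).
     column_cells (Suc (length lt)) (prefix_sum b0 lb) (prefix_sum t0 lt))"

lemma column_cells_eq_polyomino_of_code:
  "column_cells (Suc m) b t = polyomino_of_code (b 0, t 0, diffs t m, diffs b m)"
  unfolding polyomino_of_code_def column_cells_def by (auto simp: prefix_sum_diffs less_Suc_eq_le)

definition step_pairs :: "nat \<Rightarrow> (int list \<times> int list) set" where
  "step_pairs n = {(lt, lb). length lt = length lb \<and> length lt \<le> n \<and>
     lt \<in> unimodal_step_lists 1 (int n) (length lt) \<and> lb \<in> unimodal_step_lists (-1) (int n) (length lb)}"

definition codes :: "nat \<Rightarrow> (int \<times> int \<times> int list \<times> int list) set" where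
  "codes n = {0..2 * int n} \<times> {0..2 * int n} \<times> step_pairs n"

definition code_weight :: "real \<Rightarrow> real \<Rightarrow> int list \<times> int list \<Rightarrow> real" where
  "code_weight x y = (\<lambda>(lt, lb). prod_list (map (step_weight x y) lt) * prod_list (map (step_weight x y) lb))"

lemma quasiconcave_diffs_sign_change:
  assumes "quasiconcave_upto (Suc m) f"
  shows "\<exists>p\<le>m. (\<forall>k<p. 0 \<le> f (Suc k) - f k) \<and> (\<forall>k. p \<le> k \<longrightarrow> k < m \<longrightarrow> f (Suc k) - f k \<le> 0)"
proof (cases "\<forall>k<m. 0 \<le> f (Suc k) - f k")
  case True
  then show ?thesis
    by (intro exI[of _ m]) auto
next
  case False
  define p where "p = (LEAST k. k < m \<and> f (Suc k) - f k < 0)"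
  have ex: "\<exists>k. k < m \<and> f (Suc k) - f k < 0"
    using False by auto
  have p: "p < m" "f (Suc p) < f p"
    using LeastI_ex[OF ex] unfolding p_def by auto
  have before: "0 \<le> f (Suc k) - f k" if "k < p" for k
    using not_less_Least[of k "\<lambda>k. k < m \<and> f (Suc k) - f k < 0"] that p unfolding p_def by auto
  have after: "f (Suc k) - f k \<le> 0" if "p \<le> k" "k < m" for k
  proof (rule ccontr)
    assume up: "\<not> f (Suc k) - f k \<le> 0"
    then have "p < k"
      using p that by (cases "p = k") auto
    then have "min (f p) (f (Suc k)) \<le> f (Suc p)" "min (f p) (f (Suc k)) \<le> f k"
      using assms that unfolding quasiconcave_upto_def by auto
    then show False
      using p up by linarith
  qed
  show ?thesis
    using p before after by (intro exI[of _ p]) auto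
qed

lemma diffs_mem_unimodal_step_lists:
  assumes "quasiconcave_upto (Suc m) (\<lambda>i. s * f i)" "s = 1 \<or> s = -1"
    and "\<And>k. k < m \<Longrightarrow> \<bar>f (Suc k) - f k\<bar> \<le> n"
  shows "diffs f m \<in> unimodal_step_lists s n m"
proof -
  have "s * (f (Suc k) - f k) = s * f (Suc k) - s * f k" for k
    by (simp add: right_diff_distrib)
  then show ?thesis
    using quasiconcave_diffs_sign_change[OF assms(1)] assms(3)
    unfolding unimodal_step_lists_def diffs_def by (auto simp: in_set_conv_nth)
qed

context
  fixes m n :: nat and b t :: "nat \<Rightarrow> int"
  assumes ov: "overlapping_columns (Suc m) b t"
    and cost: "d 2 (column_cells (Suc m) b t) + d 3 (column_cells (Suc m) b t) = n"
begin

lemma column_step_costs: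
  "n = nat (t 0 - b 0 + 2) + nat (t m - b m + 2) +
     (\<Sum>k<m. step_cost (t (Suc k) - t k) + step_cost (b (Suc k) - b k))"
  using d2_plus_d3_column_cells[OF ov] cost by simp

lemma column_steps_bounded:
  shows "m \<le> n" "k < m \<Longrightarrow> \<bar>t (Suc k) - t k\<bar> \<le> int n" "k < m \<Longrightarrow> \<bar>b (Suc k) - b k\<bar> \<le> int n"
    and "b i0 = 0 \<Longrightarrow> i0 \<le> m \<Longrightarrow> b 0 \<le> int n"
proof -
  let ?c = "\<lambda>k. step_cost (t (Suc k) - t k) + step_cost (b (Suc k) - b k)"
  have sum_le: "(\<Sum>k<m. ?c k) \<le> n"
    using column_step_costs by linarith
  have "(\<Sum>k<m. 1) \<le> (\<Sum>k<m. ?c k)"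
    using step_cost_ge(1) by (intro sum_mono) (simp add: add_increasing)
  with sum_le show "m \<le> n"
    by simp
  show "\<bar>t (Suc k) - t k\<bar> \<le> int n" "\<bar>b (Suc k) - b k\<bar> \<le> int n" if "k < m"
    using member_le_sum[of k "{..<m}" ?c] sum_le that step_cost_ge(2)[of "t (Suc k) - t k"]
      step_cost_ge(2)[of "b (Suc k) - b k"] by auto
  assume "b i0 = 0" "i0 \<le> m"
  then have "b 0 = (\<Sum>k<i0. b k - b (Suc k))"
    by (simp add: sum_lessThan_telescope')
  also have "\<dots> \<le> (\<Sum>k<i0. int (?c k))"
  proof (rule sum_mono)
    fix k
    show "b k - b (Suc k) \<le> int (?c k)"
      using step_cost_ge(2)[of "b (Suc k) - b k"] by simp
  qed
  also have "\<dots> \<le> (\<Sum>k<m. int (?c k))"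
    using \<open>i0 \<le> m\<close> by (intro sum_mono2) auto
  also have "\<dots> \<le> int n"
    using sum_le by (metis of_nat_le_iff of_nat_sum)
  finally show "b 0 \<le> int n" .
qed

lemma columns_code_mem_codes:
  assumes "\<forall>i<Suc m. 0 \<le> b i" "\<exists>i<Suc m. b i = 0"
    and "quasiconcave_upto (Suc m) t" "quasiconcave_upto (Suc m) (\<lambda>i. - b i)"
  shows "(b 0, t 0, diffs t m, diffs b m) \<in> codes n"
proof -
  have "0 \<le> b 0" "b 0 \<le> t 0" "b 0 \<le> int n"
    using assms(1,2) ov column_steps_bounded(4) unfolding overlapping_columns_def by auto
  moreover have "t 0 \<le> 2 * int n"
    using column_step_costs \<open>b 0 \<le> int n\<close> by linarith
  moreover have "diffs t m \<in> unimodal_step_lists 1 (int n) m"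
    using assms(3) column_steps_bounded(2) by (intro diffs_mem_unimodal_step_lists) auto
  moreover have "diffs b m \<in> unimodal_step_lists (-1) (int n) m"
    using assms(4) column_steps_bounded(3) by (intro diffs_mem_unimodal_step_lists) auto
  ultimately show ?thesis
    using column_steps_bounded(1) by (simp add: codes_def step_pairs_def)
qed

lemma code_weight_columns:
  assumes x: "0 < x" "x \<le> 1" and y: "0 \<le> y"
  shows "x ^ n * y ^ d 4 (column_cells (Suc m) b t) \<le> code_weight x y (diffs t m, diffs b m)"
proof -
  let ?c = "\<lambda>k. step_cost (t (Suc k) - t k) + step_cost (b (Suc k) - b k)"
  have "x ^ n \<le> x ^ (\<Sum>k<m. ?c k)"
    using x column_step_costs by (intro power_decreasing) auto
  then have "x ^ n * y ^ d 4 (column_cells (Suc m) b t) \<le>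
      x ^ (\<Sum>k<m. ?c k) * y ^ d 4 (column_cells (Suc m) b t)"
    using y by (simp add: mult_right_mono)
  also have "\<dots> = (\<Prod>k<m. step_weight x y (t (Suc k) - t k) * step_weight x y (b (Suc k) - b k))"
    unfolding d4_column_cells[OF ov] power_sum power_add prod.distrib step_weight_def
    by (simp add: mult_ac)
  also have "\<dots> = code_weight x y (diffs t m, diffs b m)"
    by (simp add: code_weight_def diffs_def prod.distinct_set_conv_list[symmetric] atLeast0LessThan
        prod.distrib)
  finally show ?thesis .
qed

end

lemma convex_polys_n_code:
  assumes P: "P \<in> convex_polys_n n" and x: "0 < x" "x \<le> 1" and y: "0 \<le> y"
  shows "\<exists>c\<in>codes n. P = polyomino_of_code c \<and> x ^ n * y ^ d 4 P \<le> code_weight x y (snd (snd c))"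
proof -
  have "convex_polyomino P" "normalized P"
    using P by (simp_all add: convex_polys_n_def)
  then obtain w b t where P_eq: "P = column_cells w b t" and ov: "overlapping_columns w b t"
    and shape: "\<forall>i<w. 0 \<le> b i" "\<exists>i<w. b i = 0" "quasiconcave_upto w t" "quasiconcave_upto w (\<lambda>i. - b i)"
    by (rule convex_polyomino_columns)
  obtain m where w: "w = Suc m"
    using ov unfolding overlapping_columns_def by (cases w) auto
  have cost: "d 2 (column_cells (Suc m) b t) + d 3 (column_cells (Suc m) b t) = n"
    using P unfolding convex_polys_n_def P_eq w by simp
  show ?thesis
    using columns_code_mem_codes[OF _ cost] code_weight_columns[OF _ cost x y] shape ov
      column_cells_eq_polyomino_of_code[of m b t]
    unfolding P_eq w by force
qed

lemma step_pairs_eq: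
  "step_pairs n = (\<Union>m\<le>n. unimodal_step_lists 1 (int n) m \<times> unimodal_step_lists (-1) (int n) m)"
  unfolding step_pairs_def unimodal_step_lists_def by auto

lemma finite_codes: "finite (codes n)"
  unfolding codes_def step_pairs_eq by (simp add: finite_unimodal_step_lists)

lemma code_weight_nonneg: "0 \<le> x \<Longrightarrow> 0 \<le> y \<Longrightarrow> 0 \<le> code_weight x y c"
  unfolding code_weight_def
  by (auto intro!: mult_nonneg_nonneg prod_list_nonneg simp: step_weight_nonneg split: prod.split)

lemma sum_code_weight_step_pairs_le:
  assumes x: "0 < x" "x < 1" and y: "0 < y" and xy: "x + y * x / (1 - x) \<le> 1"
  shows "(\<Sum>c\<in>step_pairs n. code_weight x y c) \<le> (real n + 1) ^ 3"
proof -
  let ?F = "\<lambda>l. prod_list (map (step_weight x y) l)"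
  have lists: "(\<Sum>l\<in>unimodal_step_lists s (int n) m. ?F l) \<le> real m + 1" if "s = 1 \<or> s = -1" for s m
    using sum_step_weight_signed_le_1[OF x y xy that] x y
    by (intro sum_unimodal_step_lists_le) (auto intro: step_weight_nonneg)
  have "(\<Sum>c\<in>step_pairs n. code_weight x y c) =
      (\<Sum>m\<le>n. \<Sum>c\<in>unimodal_step_lists 1 (int n) m \<times> unimodal_step_lists (-1) (int n) m. code_weight x y c)"
    unfolding step_pairs_eq
    by (rule sum.UNION_disjoint)
      (simp_all add: finite_unimodal_step_lists, auto simp: unimodal_step_lists_def)
  also have "\<dots> = (\<Sum>m\<le>n. (\<Sum>l\<in>unimodal_step_lists 1 (int n) m. ?F l) *
      (\<Sum>l\<in>unimodal_step_lists (-1) (int n) m. ?F l))"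
    by (simp add: code_weight_def sum_product sum.cartesian_product)
  also have "\<dots> \<le> (\<Sum>m\<le>n. (real n + 1) * (real n + 1))"
  proof (rule sum_mono)
    fix m assume "m \<in> {..n}"
    then have "real m + 1 \<le> real n + 1"
      by simp
    with lists[of 1 m] lists[of "-1" m] x y
    show "(\<Sum>l\<in>unimodal_step_lists 1 (int n) m. ?F l) * (\<Sum>l\<in>unimodal_step_lists (-1) (int n) m. ?F l)
        \<le> (real n + 1) * (real n + 1)"
      by (intro mult_mono) (auto intro!: sum_nonneg prod_list_nonneg simp: step_weight_nonneg)
  qed
  also have "\<dots> = (real n + 1) ^ 3"
    by (simp add: power3_eq_cube)
  finally show ?thesis .
qed

lemma sum_cartesian_product_snd:
  "(\<Sum>z\<in>A \<times> B. h (snd z)) = of_nat (card A) * (\<Sum>q\<in>B. h q :: 'a :: semiring_1)"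
proof -
  have "(\<Sum>z\<in>A \<times> B. h (snd z)) = (\<Sum>a\<in>A. \<Sum>q\<in>B. h q)"
    by (simp only: sum.cartesian_product) (rule sum.cong, auto)
  then show ?thesis
    by simp
qed

lemma sum_code_weight_codes_le:
  assumes "0 < x" "x < 1" "0 < y" "x + y * x / (1 - x) \<le> 1"
  shows "(\<Sum>c\<in>codes n. code_weight x y (snd (snd c))) \<le> (2 * real n + 1) ^ 2 * (real n + 1) ^ 3"
proof -
  have "(\<Sum>c\<in>codes n. code_weight x y (snd (snd c))) =
      (2 * real n + 1) ^ 2 * (\<Sum>c\<in>step_pairs n. code_weight x y c)"
    unfolding codes_def
    using sum_cartesian_product_snd[where A = "{0..2 * int n}" and B = "{0..2 * int n} \<times> step_pairs n"
        and h = "\<lambda>q. code_weight x y (snd q)"]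
      sum_cartesian_product_snd[where A = "{0..2 * int n}" and B = "step_pairs n" and h = "code_weight x y"]
    by (simp add: power2_eq_square)
  also have "\<dots> \<le> (2 * real n + 1) ^ 2 * (real n + 1) ^ 3"
    using sum_code_weight_step_pairs_le[OF assms] by (simp add: mult_left_mono)
  finally show ?thesis .
qed

lemma finite_convex_polys_n: "finite (convex_polys_n n)"
proof -
  have "convex_polys_n n \<subseteq> polyomino_of_code ` codes n"
    using convex_polys_n_code[of _ n 1 1] by force
  then show ?thesis
    by (rule finite_surj[OF finite_codes])
qed

theorem sum_weight_convex_polys_n_le:
  assumes x: "0 < x" "x < 1" and y: "0 < y" and xy: "x + y * x / (1 - x) \<le> 1"
  shows "(\<Sum>P\<in>convex_polys_n n. x ^ n * y ^ d 4 P) \<le> (2 * real n + 1) ^ 2 * (real n + 1) ^ 3"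
proof -
  let ?S = "convex_polys_n n" and ?g = "\<lambda>c. code_weight x y (snd (snd c))"
  define code where "code P = (SOME c. c \<in> codes n \<and> P = polyomino_of_code c \<and> x ^ n * y ^ d 4 P \<le> ?g c)"
    for P
  have code: "code P \<in> codes n" "P = polyomino_of_code (code P)" "x ^ n * y ^ d 4 P \<le> ?g (code P)"
    if "P \<in> ?S" for P
    using someI_ex[OF convex_polys_n_code[OF that x(1) less_imp_le[OF x(2)] less_imp_le[OF y], unfolded Bex_def]]
    unfolding code_def by auto
  have "inj_on code ?S"
    by (rule inj_onI) (metis code(2))
  then have "(\<Sum>P\<in>?S. x ^ n * y ^ d 4 P) \<le> (\<Sum>c\<in>code ` ?S. ?g c)"
    by (simp add: sum.reindex code(3) sum_mono)
  also have "\<dots> \<le> (\<Sum>c\<in>codes n. ?g c)"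
    using code(1) x y by (intro sum_mono2 finite_codes) (auto intro: code_weight_nonneg)
  also have "\<dots> \<le> (2 * real n + 1) ^ 2 * (real n + 1) ^ 3"
    by (rule sum_code_weight_codes_le[OF assms])
  finally show ?thesis .
qed

section \<open>A lower bound for the number of convex polyominoes\<close>

definition list_cost :: "nat list \<Rightarrow> nat" where
  "list_cost l = sum_list (map (\<lambda>k. step_cost (int k)) l)"

lemma step_cost_of_nat [simp]: "step_cost (int k) = max 1 k"
  by (simp add: step_cost_def)

lemma list_cost_simps [simp]:
  "list_cost [] = 0" "list_cost (k # l) = max 1 k + list_cost l"
  "list_cost (l1 @ l2) = list_cost l1 + list_cost l2"
  unfolding list_cost_def by auto

lemma length_le_list_cost: "length l \<le> list_cost l"
  by (induction l) auto

lemma sum_list_le_list_cost: "sum_list l \<le> list_cost l"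
  by (induction l) auto

definition cost_lists :: "nat \<Rightarrow> nat list set" where
  "cost_lists a = {l. list_cost l = a}"

lemma finite_cost_lists: "finite (cost_lists a)"
proof -
  have "k \<le> list_cost l" if "k \<in> set l" for k l
    using that by (induction l) auto
  then have "cost_lists a \<subseteq> {l. set l \<subseteq> {..a} \<and> length l \<le> a}"
    unfolding cost_lists_def using length_le_list_cost by fastforce
  then show ?thesis
    using finite_lists_length_le[of "{..a}" a] finite_subset by blast
qed

lemma cost_lists_0: "cost_lists 0 = {[]}"
proof -
  have "l = []" if "list_cost l = 0" for l
    using length_le_list_cost[of l] that by simp
  then show ?thesis
    unfolding cost_lists_def by auto
qed

lemma cost_lists_Suc:
  "cost_lists (Suc a) = (\<Union>k\<le>Suc a. (\<lambda>l. k # l) ` cost_lists (Suc a - max 1 k))"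
proof (intro set_eqI iffI)
  fix l assume "l \<in> cost_lists (Suc a)"
  then obtain k l' where "l = k # l'" "max 1 k + list_cost l' = Suc a"
    unfolding cost_lists_def by (cases l) auto
  then show "l \<in> (\<Union>k\<le>Suc a. (\<lambda>l. k # l) ` cost_lists (Suc a - max 1 k))"
    unfolding cost_lists_def by force
qed (auto simp: cost_lists_def)

lemma card_cost_lists_Suc:
  "card (cost_lists (Suc a)) = card (cost_lists a) + (\<Sum>k\<in>{1..Suc a}. card (cost_lists (Suc a - k)))"
proof -
  have "card (cost_lists (Suc a)) = (\<Sum>k\<le>Suc a. card ((\<lambda>l. k # l) ` cost_lists (Suc a - max 1 k)))"
    unfolding cost_lists_Suc by (rule card_UN_disjoint) (auto simp: finite_cost_lists)
  also have "\<dots> = (\<Sum>k\<le>Suc a. card (cost_lists (Suc a - max 1 k)))"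
    by (rule sum.cong) (auto simp: card_image)
  also have "\<dots> = card (cost_lists a) + (\<Sum>k\<in>{1..Suc a}. card (cost_lists (Suc a - k)))"
    by (simp add: atMost_atLeast0 sum.atLeast_Suc_atMost)
  finally show ?thesis .
qed

text \<open>Thus \<open>card (cost_lists a)\<close> is the Fibonacci number \<open>F (2 * a + 1)\<close>, which grows like
  \<open>((3 + sqrt 5) / 2) ^ a\<close>.\<close>

lemma card_cost_lists_recurrence:
  "card (cost_lists (Suc (Suc a))) + card (cost_lists a) = 3 * card (cost_lists (Suc a))"
proof -
  let ?E = "\<lambda>a. card (cost_lists a)"
  have "(\<Sum>k\<in>{1..Suc (Suc a)}. ?E (Suc (Suc a) - k)) = ?E (Suc a) + (\<Sum>k\<in>{2..Suc (Suc a)}. ?E (Suc (Suc a) - k))"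
    by (simp add: sum.atLeast_Suc_atMost numeral_2_eq_2)
  also have "(\<Sum>k\<in>{2..Suc (Suc a)}. ?E (Suc (Suc a) - k)) = (\<Sum>k\<in>{1..Suc a}. ?E (Suc a - k))"
    using sum.shift_bounds_cl_Suc_ivl[of "\<lambda>k. ?E (Suc (Suc a) - k)" 1 "Suc a"] by (simp add: numeral_2_eq_2)
  finally show ?thesis
    using card_cost_lists_Suc[of "Suc a"] card_cost_lists_Suc[of a] by simp
qed

lemma card_cost_lists_lower: "((3 + sqrt 5) / 2) ^ a \<le> real (card (cost_lists (Suc a)))"
proof -
  let ?E = "\<lambda>a. real (card (cost_lists a))"
  define r :: real where "r = (3 + sqrt 5) / 2"
  define q :: real where "q = (3 - sqrt 5) / 2"
  have rq: "r + q = 3" "r * q = 1"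
    unfolding r_def q_def by (auto simp: field_simps)
  have q: "0 \<le> q" "q \<le> 1"
    unfolding q_def using real_sqrt_le_iff[of 5 9] real_sqrt_le_iff[of 1 5] by auto
  \<comment> \<open>\<open>r\<close> and \<open>q\<close> are the roots of \<open>X\<^sup>2 - 3 X + 1\<close>, so the recurrence makes this difference geometric\<close>
  have geometric: "?E (Suc a) - q * ?E a = r ^ a * (2 - q)" for a
  proof (induction a)
    case 0
    then show ?case
      using card_cost_lists_Suc[of 0] by (simp add: cost_lists_0)
  next
    case (Suc a)
    have "?E (Suc (Suc a)) = 3 * ?E (Suc a) - ?E a"
      using card_cost_lists_recurrence[of a] by (simp add: of_nat_add[symmetric])
    then have "?E (Suc (Suc a)) - q * ?E (Suc a) = (3 - q) * ?E (Suc a) - ?E a"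
      by (simp add: algebra_simps)
    also have "\<dots> = r * (?E (Suc a) - q * ?E a)"
      using rq by (simp add: algebra_simps flip: rq(1))
    finally show ?case
      using Suc.IH by simp
  qed
  have "0 \<le> r ^ a"
    unfolding r_def by simp
  then have "r ^ a * 1 \<le> r ^ a * (2 - q)"
    using q by (intro mult_left_mono) auto
  also have "\<dots> \<le> ?E (Suc a)"
    using geometric[of a] q by (simp add: algebra_simps)
  finally show ?thesis
    unfolding r_def by simp
qed

definition even_cost_lists :: "nat \<Rightarrow> nat \<Rightarrow> nat list set" where
  "even_cost_lists a s = {l. even (length l) \<and> list_cost l = a \<and> sum_list l = s}"

lemma finite_even_cost_lists: "finite (even_cost_lists a s)"
  by (rule finite_subset[OF _ finite_cost_lists[of a]]) (auto simp: even_cost_lists_def cost_lists_def)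

lemma exists_large_even_cost_lists:
  "\<exists>s. card (cost_lists a) \<le> (a + 3) * card (even_cost_lists (a + 2) s)"
proof -
  let ?C = "\<lambda>s. even_cost_lists (a + 2) s"
  define pad where "pad l = l @ (if even (length l) then [1, 1] else [2 :: nat])" for l
  define M where "M = Max ((\<lambda>s. card (?C s)) ` {..a + 2})"
  have "M \<in> (\<lambda>s. card (?C s)) ` {..a + 2}"
    unfolding M_def by (intro Max_in) auto
  then obtain s where s: "card (?C s) = M"
    by auto
  have "inj_on pad (cost_lists a)"
  proof (rule inj_onI)
    fix l1 l2 assume eq: "pad l1 = pad l2"
    then have "last (pad l1) = last (pad l2)"
      by simp
    then have "even (length l1) \<longleftrightarrow> even (length l2)"
      unfolding pad_def by (auto split: if_splits)
    then show "l1 = l2"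
      using eq unfolding pad_def by (auto split: if_splits)
  qed
  moreover have "pad ` cost_lists a \<subseteq> (\<Union>s\<le>a + 2. ?C s)"
    using sum_list_le_list_cost unfolding pad_def cost_lists_def even_cost_lists_def by fastforce
  ultimately have "card (cost_lists a) \<le> card (\<Union>s\<le>a + 2. ?C s)"
    by (intro card_inj_on_le) (auto simp: finite_even_cost_lists)
  also have "\<dots> \<le> (\<Sum>s\<le>a + 2. card (?C s))"
    by (rule card_UN_le) simp
  also have "\<dots> \<le> (\<Sum>s\<le>a + 2. M)"
    unfolding M_def by (intro sum_mono Max_ge) auto
  also have "\<dots> = (a + 3) * card (?C s)"
    using s by (simp add: algebra_simps)
  finally show ?thesis
    by blast
qed

text \<open>A list of steps \<open>(dt, db)\<close> describes a sequence of columns: each step moves the top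
  of the current column by \<open>dt\<close> and its bottom by \<open>db\<close>. Admissibility, with \<open>h\<close> the number of
  cells of the current column, says that consecutive columns overlap.\<close>

fun admissible_steps :: "int \<Rightarrow> (int \<times> int) list \<Rightarrow> bool" where
  "admissible_steps h [] \<longleftrightarrow> 1 \<le> h"
| "admissible_steps h ((dt, db) # J) \<longleftrightarrow>
     1 \<le> h \<and> db \<le> h - 1 \<and> - dt \<le> h - 1 \<and> admissible_steps (h + dt - db) J"

definition height_change :: "(int \<times> int) list \<Rightarrow> int" where
  "height_change J = sum_list (map (\<lambda>(dt, db). dt - db) J)"

definition steps_cost :: "(int \<times> int) list \<Rightarrow> nat" where
  "steps_cost J = sum_list (map (\<lambda>(dt, db). step_cost dt + step_cost db) J)"

definition polyomino_of_steps :: "int \<Rightarrow> int \<Rightarrow> (int \<times> int) list \<Rightarrow> cell set" where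
  "polyomino_of_steps b0 t0 J =
     column_cells (Suc (length J)) (prefix_sum b0 (map snd J)) (prefix_sum t0 (map fst J))"

lemma height_change_append [simp]: "height_change (J1 @ J2) = height_change J1 + height_change J2"
  unfolding height_change_def by simp

lemma steps_cost_append [simp]: "steps_cost (J1 @ J2) = steps_cost J1 + steps_cost J2"
  unfolding steps_cost_def by simp

lemma admissible_steps_pos: "admissible_steps h J \<Longrightarrow> 1 \<le> h"
  by (cases J) auto

lemma admissible_steps_append:
  "admissible_steps h (J1 @ J2) \<longleftrightarrow> admissible_steps h J1 \<and> admissible_steps (h + height_change J1) J2"
  by (induction J1 arbitrary: h) (auto simp: height_change_def admissible_steps_pos algebra_simps)

lemma prefix_sum_0 [simp]: "prefix_sum a l 0 = a"
  unfolding prefix_sum_def by simp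

lemma prefix_sum_Suc_Cons [simp]: "prefix_sum a (x # l) (Suc i) = prefix_sum (a + x) l i"
  unfolding prefix_sum_def by simp

lemma prefix_sum_Suc: "i < length l \<Longrightarrow> prefix_sum a l (Suc i) = prefix_sum a l i + l ! i"
  unfolding prefix_sum_def by (simp add: take_Suc_conv_app_nth)

lemma prefix_sum_uminus: "prefix_sum (- a) (map uminus l) i = - prefix_sum a l i"
proof (induction l arbitrary: i a)
  case (Cons x l)
  then show ?case
    by (cases i) (simp_all add: prefix_sum_def)
qed (simp add: prefix_sum_def)

lemma admissible_steps_overlapping:
  assumes "admissible_steps (t0 - b0 + 1) J"
  shows "overlapping_columns (Suc (length J)) (prefix_sum b0 (map snd J)) (prefix_sum t0 (map fst J))"
  using assms
proof (induction J arbitrary: b0 t0)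
  case (Cons x J)
  obtain dt db where x: "x = (dt, db)"
    by force
  have h: "b0 \<le> t0" "db \<le> t0 - b0" "- dt \<le> t0 - b0" "admissible_steps ((t0 + dt) - (b0 + db) + 1) J"
    using Cons.prems unfolding x by (auto simp: algebra_simps)
  have IH: "overlapping_columns (Suc (length J)) (prefix_sum (b0 + db) (map snd J)) (prefix_sum (t0 + dt) (map fst J))"
    using Cons.IH[OF h(4)] .
  have "prefix_sum b0 (map snd (x # J)) i \<le> prefix_sum t0 (map fst (x # J)) i"
    if "i < Suc (length (x # J))" for i
    using IH h that unfolding overlapping_columns_def x by (cases i) auto
  moreover have "prefix_sum b0 (map snd (x # J)) (Suc k) \<le> prefix_sum t0 (map fst (x # J)) k \<and>
      prefix_sum b0 (map snd (x # J)) k \<le> prefix_sum t0 (map fst (x # J)) (Suc k)"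
    if "Suc k < Suc (length (x # J))" for k
    using IH h that unfolding overlapping_columns_def x by (cases k) auto
  ultimately show ?case
    unfolding overlapping_columns_def by simp
qed (simp add: overlapping_columns_def)

lemma prefix_sum_mono:
  assumes "\<forall>k<p. 0 \<le> l ! k" "p \<le> length l" "i \<le> j" "j \<le> p"
  shows "prefix_sum a l i \<le> prefix_sum a l j"
  using assms(3,4)
proof (induction j)
  case (Suc j)
  show ?case
  proof (cases "i = Suc j")
    case False
    then have "i \<le> j" "0 \<le> l ! j" "j < length l"
      using Suc.prems assms(1,2) by auto
    then show ?thesis
      using Suc.IH prefix_sum_Suc[of j l a] Suc.prems by simp
  qed simp
qed simp

lemma prefix_sum_antimono:
  assumes "\<forall>k. p \<le> k \<longrightarrow> k < length l \<longrightarrow> l ! k \<le> 0" "p \<le> j" "j \<le> k" "k \<le> length l"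
  shows "prefix_sum a l k \<le> prefix_sum a l j"
  using assms(3,4)
proof (induction k)
  case (Suc k)
  show ?case
  proof (cases "j = Suc k")
    case False
    then have "j \<le> k" "l ! k \<le> 0" "k < length l"
      using Suc.prems assms(1,2) by auto
    then show ?thesis
      using Suc.IH prefix_sum_Suc[of k l a] Suc.prems by simp
  qed simp
qed simp

lemma quasiconcave_prefix_sum:
  assumes "p \<le> length l" "\<forall>k<p. 0 \<le> l ! k" "\<forall>k. p \<le> k \<longrightarrow> k < length l \<longrightarrow> l ! k \<le> 0"
  shows "quasiconcave_upto (Suc (length l)) (prefix_sum a l)"
  unfolding quasiconcave_upto_def
proof (intro allI impI)
  fix i j k assume ij: "i \<le> j" and jk: "j \<le> k" and kw: "k < Suc (length l)"
  show "min (prefix_sum a l i) (prefix_sum a l k) \<le> prefix_sum a l j"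
  proof (cases "j \<le> p")
    case True
    then show ?thesis
      using prefix_sum_mono[OF assms(2,1) ij] by (simp add: min.coboundedI1)
  next
    case False
    then show ?thesis
      using prefix_sum_antimono[OF assms(3), of j k] jk kw by (simp add: min.coboundedI2)
  qed
qed

lemma quasiconcave_neg_prefix_sum:
  assumes "p \<le> length l" "\<forall>k<p. l ! k \<le> 0" "\<forall>k. p \<le> k \<longrightarrow> k < length l \<longrightarrow> 0 \<le> l ! k"
  shows "quasiconcave_upto (Suc (length l)) (\<lambda>i. - prefix_sum a l i)"
  using quasiconcave_prefix_sum[of p "map uminus l" "- a"] assms
  unfolding quasiconcave_upto_def by (simp add: prefix_sum_uminus)

lemma prefix_sum_min:
  assumes "p \<le> length l" "\<forall>k<p. l ! k \<le> 0" "\<forall>k. p \<le> k \<longrightarrow> k < length l \<longrightarrow> 0 \<le> l ! k" "j \<le> length l"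
  shows "prefix_sum a l p \<le> prefix_sum a l j"
proof (cases "j \<le> p")
  case True
  have "prefix_sum (- a) (map uminus l) j \<le> prefix_sum (- a) (map uminus l) p"
    by (rule prefix_sum_mono[of p]) (use assms True in auto)
  then show ?thesis
    by (simp add: prefix_sum_uminus)
next
  case False
  have "prefix_sum (- a) (map uminus l) j \<le> prefix_sum (- a) (map uminus l) p"
    by (rule prefix_sum_antimono[of p]) (use assms False in auto)
  then show ?thesis
    by (simp add: prefix_sum_uminus)
qed

lemma d2_plus_d3_polyomino_of_steps:
  assumes "admissible_steps (t0 - b0 + 1) J"
  shows "d 2 (polyomino_of_steps b0 t0 J) + d 3 (polyomino_of_steps b0 t0 J) =
     nat (t0 - b0 + 2) + nat (t0 - b0 + height_change J + 2) + steps_cost J"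
proof -
  let ?b = "prefix_sum b0 (map snd J)" and ?t = "prefix_sum t0 (map fst J)"
  have "?t (length J) - ?b (length J) = t0 - b0 + height_change J"
    unfolding prefix_sum_def height_change_def by (simp add: sum_list_subtractf split_def)
  moreover have "(\<Sum>k<length J. step_cost (?t (Suc k) - ?t k) + step_cost (?b (Suc k) - ?b k)) =
      steps_cost J"
    unfolding steps_cost_def sum_list_sum_nth atLeast0LessThan
    by (rule sum.cong) (auto simp: prefix_sum_Suc split_def)
  ultimately show ?thesis
    using d2_plus_d3_column_cells[OF admissible_steps_overlapping[OF assms]]
    unfolding polyomino_of_steps_def by simp
qed

lemma column_cells_inj:
  assumes "overlapping_columns w b t" "overlapping_columns w' b' t'"
    and "column_cells w b t = column_cells w' b' t'"
  shows "w = w' \<and> (\<forall>i<w. b i = b' i \<and> t i = t' i)"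
proof -
  have le: "w \<le> w' \<and> (\<forall>i<w. b' i \<le> b i \<and> t i \<le> t' i)"
    if ov: "overlapping_columns w b t" and eq: "column_cells w b t = column_cells w' b' t'"
    for w b t w' b' t'
  proof -
    have "(int i, b i) \<in> column_cells w' b' t'" "(int i, t i) \<in> column_cells w' b' t'" if "i < w" for i
      using ov that unfolding eq[symmetric] overlapping_columns_def by (auto simp: mem_column_cells)
    moreover have "w - 1 < w"
      using ov unfolding overlapping_columns_def by simp
    ultimately show ?thesis
      by (fastforce simp: mem_column_cells)
  qed
  from le[OF assms(1,3)] le[OF assms(2) assms(3)[symmetric]] show ?thesis
    by force
qed

lemma polyomino_of_steps_inj:
  assumes "admissible_steps (t0 - b0 + 1) J" "admissible_steps (t0' - b0' + 1) J'"
    and "polyomino_of_steps b0 t0 J = polyomino_of_steps b0' t0' J'"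
  shows "b0 = b0' \<and> t0 = t0' \<and> J = J'"
proof -
  let ?b = "prefix_sum b0 (map snd J)" and ?t = "prefix_sum t0 (map fst J)"
  let ?b' = "prefix_sum b0' (map snd J')" and ?t' = "prefix_sum t0' (map fst J')"
  have eq: "length J = length J'" "\<And>i. i < Suc (length J) \<Longrightarrow> ?b i = ?b' i \<and> ?t i = ?t' i"
    using column_cells_inj[OF admissible_steps_overlapping[OF assms(1)] admissible_steps_overlapping[OF assms(2)]]
      assms(3) unfolding polyomino_of_steps_def by auto
  have "J ! k = J' ! k" if k: "k < length J" for k
  proof -
    have "?b (Suc k) - ?b k = ?b' (Suc k) - ?b' k" "?t (Suc k) - ?t k = ?t' (Suc k) - ?t' k"
      using eq(2)[of k] eq(2)[of "Suc k"] k by auto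
    then show ?thesis
      using k eq(1) by (simp add: prefix_sum_Suc prod_eq_iff)
  qed
  then show ?thesis
    using eq(1) eq(2)[of 0] by (simp add: nth_equalityI)
qed

fun left_steps :: "nat list \<Rightarrow> (int \<times> int) list" where
  "left_steps (u # v # l) = (int u, - int v) # left_steps l"
| "left_steps _ = []"

fun right_steps :: "nat list \<Rightarrow> (int \<times> int) list" where
  "right_steps (u # v # l) = (- int u, int v) # right_steps l"
| "right_steps _ = []"

fun bottom_drop :: "nat list \<Rightarrow> nat" where
  "bottom_drop (u # v # l) = v + bottom_drop l"
| "bottom_drop _ = 0"

definition gadget_even :: "(int \<times> int) list" where
  "gadget_even = [(1, 1)]"

definition gadget_odd :: "(int \<times> int) list" where
  "gadget_odd = [(1, 2), (1, 0)]"

definition family_steps :: "(int \<times> int) list \<Rightarrow> nat list \<Rightarrow> nat list \<Rightarrow> (int \<times> int) list" where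
  "family_steps G L R = left_steps L @ G @ right_steps R"

text \<open>Starting from a column of three cells, the left steps let the columns grow, the gadget
  (of cost 2 or 5) fixes the parity of the cost, and the right steps shrink the columns back to
  three cells. The bottom is lowest, namely at height 0, where the left steps end.\<close>

definition family_poly :: "(int \<times> int) list \<Rightarrow> nat list \<Rightarrow> nat list \<Rightarrow> cell set" where
  "family_poly G L R = polyomino_of_steps (int (bottom_drop L)) (int (bottom_drop L) + 2) (family_steps G L R)"

lemma height_change_left_steps: "even (length L) \<Longrightarrow> height_change (left_steps L) = int (sum_list L)"
  by (induction L rule: left_steps.induct) (auto simp: height_change_def)

lemma height_change_right_steps: "even (length R) \<Longrightarrow> height_change (right_steps R) = - int (sum_list R)"
  by (induction R rule: right_steps.induct) (auto simp: height_change_def)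

lemma steps_cost_left_steps: "even (length L) \<Longrightarrow> steps_cost (left_steps L) = list_cost L"
  by (induction L rule: left_steps.induct) (auto simp: steps_cost_def step_cost_def)

lemma steps_cost_right_steps: "even (length R) \<Longrightarrow> steps_cost (right_steps R) = list_cost R"
  by (induction R rule: right_steps.induct) (auto simp: steps_cost_def step_cost_def)

lemma admissible_left_steps: "1 \<le> h \<Longrightarrow> admissible_steps h (left_steps L)"
  by (induction L arbitrary: h rule: left_steps.induct) auto

lemma admissible_right_steps: "1 + int (sum_list R) \<le> h \<Longrightarrow> admissible_steps h (right_steps R)"
  by (induction R arbitrary: h rule: right_steps.induct) auto

lemma sum_snd_left_steps: "sum_list (map snd (left_steps L)) = - int (bottom_drop L)"
  by (induction L rule: left_steps.induct) auto

lemma set_left_steps: "x \<in> set (left_steps L) \<Longrightarrow> 0 \<le> fst x \<and> snd x \<le> 0"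
  by (induction L rule: left_steps.induct) auto

lemma set_right_steps: "x \<in> set (right_steps R) \<Longrightarrow> fst x \<le> 0 \<and> 0 \<le> snd x"
  by (induction R rule: right_steps.induct) auto

lemma left_steps_inj: "even (length L1) \<Longrightarrow> even (length L2) \<Longrightarrow> left_steps L1 = left_steps L2 \<Longrightarrow> L1 = L2"
proof (induction L1 arbitrary: L2 rule: left_steps.induct)
  case (1 u v l)
  then show ?case
    by (cases L2 rule: left_steps.cases) auto
next
  case "2_1"
  then show ?case
    by (cases L2 rule: left_steps.cases) auto
qed simp

lemma right_steps_inj: "even (length R1) \<Longrightarrow> even (length R2) \<Longrightarrow> right_steps R1 = right_steps R2 \<Longrightarrow> R1 = R2"
proof (induction R1 arbitrary: R2 rule: right_steps.induct)
  case (1 u v l)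
  then show ?case
    by (cases R2 rule: right_steps.cases) auto
next
  case "2_1"
  then show ?case
    by (cases R2 rule: right_steps.cases) auto
qed simp

lemma nth_append_sign:
  assumes "\<forall>x\<in>set A. P x" "\<forall>x\<in>set B. Q x"
  shows "\<forall>k<length A. P ((A @ B) ! k)" "\<forall>k. length A \<le> k \<longrightarrow> k < length (A @ B) \<longrightarrow> Q ((A @ B) ! k)"
  using assms by (auto simp: nth_append)

lemma steps_cost_gadgets: "steps_cost gadget_even = 2" "steps_cost gadget_odd = 5"
  by (simp_all add: steps_cost_def gadget_even_def gadget_odd_def step_cost_def)

lemma gadgets:
  assumes "G \<in> {gadget_even, gadget_odd}"
  shows "height_change G = 0" "3 \<le> h \<Longrightarrow> admissible_steps h G" "x \<in> set G \<Longrightarrow> 0 \<le> fst x \<and> 0 \<le> snd x"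
    and "G \<noteq> []" "0 < snd (hd G)"
  using assms by (auto simp: gadget_even_def gadget_odd_def height_change_def)

context
  fixes G :: "(int \<times> int) list" and L R :: "nat list"
  assumes G: "G \<in> {gadget_even, gadget_odd}"
    and even: "even (length L)" "even (length R)" and same_sum: "sum_list L = sum_list R"
begin

lemma admissible_family_steps: "admissible_steps 3 (family_steps G L R)"
  using admissible_left_steps[of 3 L] gadgets(2)[OF G, of "3 + height_change (left_steps L)"]
    admissible_right_steps[of R "3 + height_change (left_steps L) + height_change G"]
    height_change_left_steps[OF even(1)] gadgets(1)[OF G] same_sum
  unfolding family_steps_def admissible_steps_append by (simp add: add.assoc)

lemma convex_normalized_family_poly:
  "convex_polyomino (family_poly G L R) \<and> normalized (family_poly G L R)"
proof -
  let ?J = "family_steps G L R" and ?base = "int (bottom_drop L)"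
  let ?b = "prefix_sum ?base (map snd ?J)" and ?t = "prefix_sum (?base + 2) (map fst ?J)"
  let ?p = "length (left_steps L)"
  have ov: "overlapping_columns (Suc (length ?J)) ?b ?t"
    using admissible_steps_overlapping[of "?base + 2" ?base] admissible_family_steps by simp
  have "map fst ?J = map fst (left_steps L @ G) @ map fst (right_steps R)"
    "\<forall>x\<in>set (map fst (left_steps L @ G)). 0 \<le> x" "\<forall>x\<in>set (map fst (right_steps R)). x \<le> 0"
    using set_left_steps gadgets(3)[OF G] set_right_steps by (auto simp: family_steps_def)
  from nth_append_sign[OF this(2,3)] this(1)
  have top: "\<forall>k<length (left_steps L @ G). 0 \<le> map fst ?J ! k"
    "\<forall>k. length (left_steps L @ G) \<le> k \<longrightarrow> k < length ?J \<longrightarrow> map fst ?J ! k \<le> 0"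
    by (simp_all add: family_steps_def)
  have "map snd ?J = map snd (left_steps L) @ map snd (G @ right_steps R)"
    "\<forall>x\<in>set (map snd (left_steps L)). x \<le> 0" "\<forall>x\<in>set (map snd (G @ right_steps R)). 0 \<le> x"
    using set_left_steps gadgets(3)[OF G] set_right_steps by (auto simp: family_steps_def)
  from nth_append_sign[OF this(2,3)] this(1)
  have bot: "\<forall>k<?p. map snd ?J ! k \<le> 0" "\<forall>k. ?p \<le> k \<longrightarrow> k < length ?J \<longrightarrow> 0 \<le> map snd ?J ! k"
    by (simp_all add: family_steps_def)
  have "quasiconcave_upto (Suc (length ?J)) ?t"
    using quasiconcave_prefix_sum[of "length (left_steps L @ G)" "map fst ?J" "?base + 2"] top
    by (simp add: family_steps_def)
  moreover have "quasiconcave_upto (Suc (length ?J)) (\<lambda>i. - ?b i)"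
    using quasiconcave_neg_prefix_sum[of ?p "map snd ?J"] bot by (simp add: family_steps_def)
  moreover have "?b ?p \<le> ?b j" if "j \<le> length ?J" for j
    using prefix_sum_min[of ?p "map snd ?J"] bot that by (simp add: family_steps_def)
  moreover have "?b ?p = 0"
    using sum_snd_left_steps[of L] by (simp add: prefix_sum_def family_steps_def)
  moreover have "?p < Suc (length ?J)"
    by (simp add: family_steps_def)
  ultimately show ?thesis
    using convex_polyomino_column_cells[OF ov] normalized_column_cells[OF ov]
    unfolding family_poly_def polyomino_of_steps_def by (metis less_Suc_eq_le)
qed

lemma family_poly_mem: "family_poly G L R \<in> convex_polys_n (8 + list_cost L + list_cost R + steps_cost G)"
proof -
  have "height_change (family_steps G L R) = 0"
    unfolding family_steps_def using height_change_left_steps[OF even(1)]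
      height_change_right_steps[OF even(2)] gadgets(1)[OF G] same_sum by simp
  then have "d 2 (family_poly G L R) + d 3 (family_poly G L R) = 8 + list_cost L + list_cost R + steps_cost G"
    using d2_plus_d3_polyomino_of_steps[of "int (bottom_drop L) + 2" "int (bottom_drop L)"]
      admissible_family_steps steps_cost_left_steps[OF even(1)] steps_cost_right_steps[OF even(2)]
    unfolding family_poly_def by (simp add: family_steps_def)
  then show ?thesis
    using convex_normalized_family_poly unfolding convex_polys_n_def by simp
qed

end

lemma same_append_Cons_split:
  assumes "x \<notin> set xs" "x \<notin> set xs'" "xs @ x # ys = xs' @ x # ys'"
  shows "xs = xs' \<and> ys = ys'"
  using assms
proof (induction xs arbitrary: xs')
  case Nil
  then show ?case
    by (cases xs') auto
next
  case (Cons a xs)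
  then obtain zs where "xs' = a # zs"
    by (cases xs') auto
  with Cons show ?case
    by simp
qed

lemma family_poly_inj:
  assumes G: "G \<in> {gadget_even, gadget_odd}"
    and L1: "even (length L1)" "even (length R1)" "sum_list L1 = sum_list R1"
    and L2: "even (length L2)" "even (length R2)" "sum_list L2 = sum_list R2"
    and eq: "family_poly G L1 R1 = family_poly G L2 R2"
  shows "L1 = L2 \<and> R1 = R2"
proof -
  have "family_steps G L1 R1 = family_steps G L2 R2"
    using polyomino_of_steps_inj[of "int (bottom_drop L1) + 2" "int (bottom_drop L1)"
        _ "int (bottom_drop L2) + 2" "int (bottom_drop L2)"]
      admissible_family_steps[OF G L1] admissible_family_steps[OF G L2] eq
    unfolding family_poly_def by simp
  then have eq': "left_steps L1 @ hd G # tl G @ right_steps R1 = left_steps L2 @ hd G # tl G @ right_steps R2"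
    using gadgets(4)[OF G] unfolding family_steps_def by (cases G) auto
  \<comment> \<open>the gadget starts with the first step whose \<open>db\<close> is positive\<close>
  have "hd G \<notin> set (left_steps L)" for L
    using set_left_steps gadgets(5)[OF G] by fastforce
  then have "left_steps L1 = left_steps L2 \<and> tl G @ right_steps R1 = tl G @ right_steps R2"
    using same_append_Cons_split[OF _ _ eq'] by blast
  then show ?thesis
    using left_steps_inj[OF L1(1) L2(1)] right_steps_inj[OF L1(2) L2(2)] by simp
qed

lemma card_even_cost_lists_le:
  assumes G: "G \<in> {gadget_even, gadget_odd}" and n: "n = 8 + 2 * a + steps_cost G"
  shows "card (even_cost_lists a s) ^ 2 \<le> card (convex_polys_n n)"
proof -
  let ?C = "even_cost_lists a s"
  have C: "even (length L)" "list_cost L = a" "sum_list L = s" if "L \<in> ?C" for L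
    using that by (simp_all add: even_cost_lists_def)
  have "inj_on (\<lambda>(L, R). family_poly G L R) (?C \<times> ?C)"
  proof (rule inj_onI, safe)
    fix L1 R1 L2 R2 assume h: "L1 \<in> ?C" "R1 \<in> ?C" "L2 \<in> ?C" "R2 \<in> ?C"
      and eq: "family_poly G L1 R1 = family_poly G L2 R2"
    have "sum_list L1 = sum_list R1" "sum_list L2 = sum_list R2"
      using C(3)[OF h(1)] C(3)[OF h(2)] C(3)[OF h(3)] C(3)[OF h(4)] by simp_all
    then have "L1 = L2 \<and> R1 = R2"
      using family_poly_inj[OF G C(1)[OF h(1)] C(1)[OF h(2)] _ C(1)[OF h(3)] C(1)[OF h(4)] _ eq] by simp
    then show "L1 = L2" "R1 = R2"
      by simp_all
  qed
  moreover have "family_poly G L R \<in> convex_polys_n n" if "L \<in> ?C" "R \<in> ?C" for L R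
  proof -
    have "n = 8 + list_cost L + list_cost R + steps_cost G"
      using C(2)[OF that(1)] C(2)[OF that(2)] n by simp
    then show ?thesis
      using family_poly_mem[OF G C(1)[OF that(1)] C(1)[OF that(2)]] C(3) that by metis
  qed
  then have "(\<lambda>(L, R). family_poly G L R) ` (?C \<times> ?C) \<subseteq> convex_polys_n n"
    by auto
  ultimately have "card (?C \<times> ?C) \<le> card (convex_polys_n n)"
    using finite_convex_polys_n by (rule card_inj_on_le)
  then show ?thesis
    by (simp add: power2_eq_square card_cartesian_product)
qed

lemma exists_large_even_cost_lists_lower:
  "\<exists>s. ((3 + sqrt 5) / 2) ^ c / real (c + 4) \<le> real (card (even_cost_lists (c + 3) s))"
proof -
  have "Suc c + 3 = c + 4" "Suc c + 2 = c + 3"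
    by simp_all
  then obtain s where s: "card (cost_lists (Suc c)) \<le> (c + 4) * card (even_cost_lists (c + 3) s)"
    using exists_large_even_cost_lists[of "Suc c"] by metis
  have "((3 + sqrt 5) / 2) ^ c \<le> real (card (cost_lists (Suc c)))"
    by (rule card_cost_lists_lower)
  also have "\<dots> \<le> real (c + 4) * real (card (even_cost_lists (c + 3) s))"
    using s by (simp only: of_nat_mult[symmetric] of_nat_le_iff)
  finally show ?thesis
    by (auto simp: divide_le_eq mult.commute)
qed

lemma gadget_for_size:
  assumes "19 \<le> n"
  obtains c G where "G \<in> {gadget_even, gadget_odd}" "n = 8 + 2 * (c + 3) + steps_cost G" "n - 19 \<le> 2 * c"
proof (cases "even n")
  case True
  then obtain k where "n = 2 * k"
    by (auto elim: evenE)
  with assms show ?thesis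
    by (intro that[of gadget_even "k - 8"]) (simp_all add: steps_cost_gadgets)
next
  case False
  then obtain k where "n = 2 * k + 1"
    by (auto elim: oddE)
  with assms show ?thesis
    by (intro that[of gadget_odd "k - 9"]) (simp_all add: steps_cost_gadgets)
qed

theorem card_convex_polys_n_lower:
  assumes n: "19 \<le> n"
  shows "((3 + sqrt 5) / 2) ^ (n - 19) / (real n + 1) ^ 2 \<le> real (card (convex_polys_n n))"
proof -
  define r :: real where "r = (3 + sqrt 5) / 2"
  have r: "1 \<le> r"
    unfolding r_def by simp
  obtain c G where G: "G \<in> {gadget_even, gadget_odd}" and nc: "n = 8 + 2 * (c + 3) + steps_cost G"
    and n_le: "n - 19 \<le> 2 * c"
    using gadget_for_size[OF n] by blast
  obtain s where s: "r ^ c / real (c + 4) \<le> real (card (even_cost_lists (c + 3) s))"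
    using exists_large_even_cost_lists_lower unfolding r_def by blast
  then have "(r ^ c / real (c + 4)) ^ 2 \<le> real (card (even_cost_lists (c + 3) s)) ^ 2"
    using r by (intro power_mono) auto
  also have "\<dots> \<le> real (card (convex_polys_n n))"
    using card_even_cost_lists_le[OF G nc] by (metis of_nat_le_iff of_nat_power)
  finally have "r ^ (2 * c) / real (c + 4) ^ 2 \<le> real (card (convex_polys_n n))"
    by (simp add: power_divide power_mult mult.commute)
  moreover have "r ^ (n - 19) / (real n + 1) ^ 2 \<le> r ^ (2 * c) / real (c + 4) ^ 2"
  proof (rule frac_le)
    show "r ^ (n - 19) \<le> r ^ (2 * c)"
      using n_le by (rule power_increasing[OF _ r])
    show "real (c + 4) ^ 2 \<le> (real n + 1) ^ 2"
      using nc by (intro power_mono) auto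
  qed (use r in auto)
  ultimately show ?thesis
    unfolding r_def by linarith
qed

section \<open>Concentration of the number of degree-4 vertices\<close>

text \<open>For \<open>y > 0\<close>, \<open>tilt y\<close> is the root in \<open>(0, 1)\<close> of \<open>x\<^sup>2 - (2 + y) x + 1\<close>, i.e. the solution
  of \<open>x + y x / (1 - x) = 1\<close>, so that the upper bound applies to \<open>x = tilt y\<close>.\<close>

definition tilt :: "real \<Rightarrow> real" where
  "tilt y = (2 + y - sqrt (y ^ 2 + 4 * y)) / 2"

lemma tilt_bounds:
  assumes "0 < y"
  shows "0 < tilt y" "tilt y < 1" "tilt y + y * tilt y / (1 - tilt y) \<le> 1"
proof -
  let ?s = "sqrt (y ^ 2 + 4 * y)"
  have s: "0 \<le> ?s" "?s ^ 2 = y ^ 2 + 4 * y"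
    using assms by simp_all
  have "?s < 2 + y" "y < ?s"
    using assms by (auto intro!: real_less_lsqrt real_less_rsqrt simp: power2_eq_square algebra_simps)
  then show pos: "0 < tilt y" and lt1: "tilt y < 1"
    unfolding tilt_def by simp_all
  have "tilt y ^ 2 - (2 + y) * tilt y + 1 = 0"
    unfolding tilt_def using s by (simp add: power2_eq_square field_simps)
  then have "tilt y * (1 - tilt y) + y * tilt y = 1 - tilt y"
    by (simp add: power2_eq_square algebra_simps)
  then show "tilt y + y * tilt y / (1 - tilt y) \<le> 1"
    using lt1 by (simp add: field_simps)
qed

lemma tilt_1: "tilt 1 = (3 - sqrt 5) / 2"
  unfolding tilt_def by simp

text \<open>The derivative vanishes exactly for \<open>a = 1 / sqrt 5\<close>: this is where the constant of the
  theorem comes from.\<close>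

lemma tilt_powr_deriv:
  "((\<lambda>y. tilt y * y powr a) has_real_derivative (3 - sqrt 5) / 2 * (a - 1 / sqrt 5)) (at 1)"
proof -
  have inner: "((\<lambda>y. y ^ 2 + 4 * y) has_real_derivative 6) (at (1::real))"
    by (auto intro!: derivative_eq_intros)
  have "(sqrt has_real_derivative (inverse (sqrt 5) / 2)) (at (1 ^ 2 + 4 * 1 :: real))"
    using DERIV_real_sqrt[of 5] by simp
  from DERIV_chain2[OF this inner]
  have "((\<lambda>y. sqrt (y ^ 2 + 4 * y)) has_real_derivative (inverse (sqrt 5) / 2 * 6)) (at (1::real))"
    by simp
  then have "(tilt has_real_derivative ((1 - inverse (sqrt 5) / 2 * 6) / 2)) (at 1)"
    unfolding tilt_def by (auto intro!: derivative_eq_intros)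
  from DERIV_mult[OF this has_real_derivative_powr[of 1 a]]
  have "((\<lambda>y. tilt y * y powr a) has_real_derivative ((1 - inverse (sqrt 5) / 2 * 6) / 2 + a * tilt 1)) (at 1)"
    by simp
  moreover have "(1 - inverse (sqrt 5) / 2 * 6) / 2 + a * tilt 1 = (3 - sqrt 5) / 2 * (a - 1 / sqrt (5::real))"
    unfolding tilt_1 by (simp add: field_simps)
  ultimately show ?thesis
    by (metis (no_types))
qed

lemma sqrt_5_bounds: "1 < sqrt (5::real)" "sqrt (5::real) < 3"
  using real_sqrt_less_iff[of 1 5] real_sqrt_less_iff[of 5 9] by simp_all

lemma exists_tilt_powr_gt_right:
  assumes "1 / sqrt 5 < a"
  shows "\<exists>y>1. (3 - sqrt 5) / 2 < tilt y * y powr a"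
proof -
  have "0 < (3 - sqrt 5) / 2 * (a - 1 / sqrt 5)"
    using assms sqrt_5_bounds by simp
  then obtain e where "e > 0" "\<forall>h>0. h < e \<longrightarrow> tilt 1 * 1 powr a < tilt (1 + h) * (1 + h) powr a"
    using DERIV_pos_inc_right[OF tilt_powr_deriv] by blast
  then show ?thesis
    by (intro exI[of _ "1 + e / 2"]) (simp add: tilt_1)
qed

lemma exists_tilt_powr_gt_left:
  assumes "a < 1 / sqrt 5"
  shows "\<exists>y. 0 < y \<and> y < 1 \<and> (3 - sqrt 5) / 2 < tilt y * y powr a"
proof -
  have "(3 - sqrt 5) / 2 * (a - 1 / sqrt 5) < 0"
    using assms sqrt_5_bounds by (simp add: mult_pos_neg)
  then obtain e where "e > 0" "\<forall>h>0. h < e \<longrightarrow> tilt 1 * 1 powr a < tilt (1 - h) * (1 - h) powr a"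
    using DERIV_neg_dec_left[OF tilt_powr_deriv] by blast
  then show ?thesis
    by (intro exI[of _ "1 - min (e / 2) (1 / 2)"]) (simp add: tilt_1)
qed

lemma poly_times_power_tendsto_0:
  fixes q :: real
  assumes "0 \<le> q" "q < 1"
  shows "(\<lambda>n. (real n + 1) ^ k * q ^ n) \<longlonglongrightarrow> 0"
proof -
  define s where "s = root (Suc k) q"
  have "q = s ^ Suc k"
    unfolding s_def by (rule real_root_pow_pos2[symmetric]) (use assms in auto)
  moreover have "0 \<le> s" "s < 1"
    unfolding s_def using assms by (auto simp: real_root_lt_1_iff)
  ultimately have s: "0 \<le> s" "s < 1" "q = s ^ Suc k"
    by auto
  have "(\<lambda>n. real n * s ^ n + s ^ n) \<longlonglongrightarrow> 0 + 0"
    using s by (intro tendsto_add powser_times_n_limit_0 LIMSEQ_power_zero) auto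
  then have "(\<lambda>n. (real n + 1) * s ^ n) \<longlonglongrightarrow> 0"
    by (simp add: algebra_simps)
  then have "(\<lambda>n. ((real n + 1) * s ^ n) ^ k * s ^ n) \<longlonglongrightarrow> 0 ^ k * 0"
    using s by (intro tendsto_mult tendsto_power LIMSEQ_power_zero) auto
  moreover have "((real n + 1) * s ^ n) ^ k * s ^ n = (real n + 1) ^ k * q ^ n" for n
    unfolding s(3) by (simp add: power_mult_distrib power_mult[symmetric] power_add[symmetric] mult.assoc)
      (simp add: mult.commute power_mult add.commute)
  ultimately show ?thesis
    by simp
qed

lemma d4_le:
  assumes "P \<in> convex_polys_n n"
  shows "d 4 P \<le> n"
proof -
  have "convex_polyomino P" "normalized P"
    using assms by (simp_all add: convex_polys_n_def)
  then obtain w b t where P: "P = column_cells w b t" and ov: "overlapping_columns w b t"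
    by (rule convex_polyomino_columns)
  have "d 4 P = (\<Sum>k<w - 1. of_bool (t (Suc k) \<noteq> t k) + of_bool (b (Suc k) \<noteq> b k))"
    using d4_column_cells[OF ov] P by simp
  also have "\<dots> \<le> (\<Sum>k<w - 1. step_cost (t (Suc k) - t k) + step_cost (b (Suc k) - b k))"
    by (intro sum_mono add_mono) (auto simp: step_cost_def)
  also have "\<dots> \<le> n"
    using d2_plus_d3_column_cells[OF ov] assms P unfolding convex_polys_n_def by simp
  finally show ?thesis .
qed

lemma card_tail_le:
  assumes y: "0 < y" and tail: "\<And>P. P \<in> Hs \<Longrightarrow> y powr (a * real n) \<le> y ^ d 4 P"
    and sub: "Hs \<subseteq> convex_polys_n n"
  shows "real (card Hs) \<le> 4 * (real n + 1) ^ 5 / (tilt y * y powr a) ^ n"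
proof -
  let ?S = "convex_polys_n n" and ?x = "tilt y"
  have x: "0 < ?x" "?x < 1" "?x + y * ?x / (1 - ?x) \<le> 1"
    using tilt_bounds[OF y] by auto
  have ya: "y powr (a * real n) = (y powr a) ^ n"
    using y by (simp add: powr_powr[symmetric] powr_realpow mult.commute)
  have "real (card Hs) = (\<Sum>P\<in>Hs. 1)"
    by simp
  also have "\<dots> \<le> (\<Sum>P\<in>Hs. y ^ d 4 P / y powr (a * real n))"
    using tail y by (intro sum_mono) simp
  also have "\<dots> \<le> (\<Sum>P\<in>?S. y ^ d 4 P / y powr (a * real n))"
    using sub y by (intro sum_mono2 finite_convex_polys_n) auto
  also have "\<dots> = (\<Sum>P\<in>?S. ?x ^ n * y ^ d 4 P) / (?x ^ n * y powr (a * real n))"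
    using x by (simp add: sum_divide_distrib sum_distrib_left[symmetric])
  also have "\<dots> \<le> (2 * real n + 1) ^ 2 * (real n + 1) ^ 3 / (?x ^ n * y powr (a * real n))"
    using sum_weight_convex_polys_n_le[OF x(1,2) y x(3)] x y by (intro divide_right_mono) auto
  also have "\<dots> \<le> 4 * (real n + 1) ^ 5 / (?x * y powr a) ^ n"
    using x y unfolding ya power_mult_distrib
    by (intro divide_right_mono) (auto simp: power2_eq_square power3_eq_cube numeral_eq_Suc algebra_simps)
  finally show ?thesis .
qed

lemma inverse_card_convex_polys_n_le:
  assumes "19 \<le> n"
  shows "1 / real (card (convex_polys_n n)) \<le>
    ((3 + sqrt 5) / 2) ^ 19 * (real n + 1) ^ 2 * ((3 - sqrt 5) / 2) ^ n"
proof -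
  define g :: real where "g = (3 + sqrt 5) / 2"
  have g: "0 < g" "((3 - sqrt 5) / 2) ^ n * g ^ n = 1"
    unfolding g_def by (simp_all add: power_mult_distrib[symmetric] field_simps add_pos_nonneg)
  have "g ^ (n - 19) / (real n + 1) ^ 2 \<le> real (card (convex_polys_n n))"
    using card_convex_polys_n_lower[OF assms] unfolding g_def .
  then have "1 / real (card (convex_polys_n n)) \<le> (real n + 1) ^ 2 / g ^ (n - 19)"
    using g by (simp add: divide_le_eq le_divide_eq mult.commute)
  also have "\<dots> = g ^ 19 * (real n + 1) ^ 2 * ((3 - sqrt 5) / 2) ^ n"
    using g assms sqrt_5_bounds by (simp add: field_simps power_diff flip: power_add)
  finally show ?thesis
    unfolding g_def .
qed

lemma fraction_tendsto_0:
  assumes y: "0 < y" and rate: "(3 - sqrt 5) / 2 < tilt y * y powr a"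
    and tail: "\<And>n P. P \<in> Hs n \<Longrightarrow> y powr (a * real n) \<le> y ^ d 4 P"
    and sub: "\<And>n. Hs n \<subseteq> convex_polys_n n"
  shows "(\<lambda>n. real (card (Hs n)) / real (card (convex_polys_n n))) \<longlonglongrightarrow> 0"
proof -
  define q where "q = (3 - sqrt 5) / 2 / (tilt y * y powr a)"
  define C where "C = 4 * ((3 + sqrt 5) / 2) ^ 19"
  have pos: "0 < tilt y * y powr a"
    using tilt_bounds(1)[OF y] y by simp
  then have q: "0 \<le> q" "q < 1"
    unfolding q_def using rate sqrt_5_bounds by auto
  have "real (card (Hs n)) / real (card (convex_polys_n n)) \<le> C * ((real n + 1) ^ 7 * q ^ n)"
    if "19 \<le> n" for n
  proof -
    have "real (card (Hs n)) / real (card (convex_polys_n n)) =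
        real (card (Hs n)) * (1 / real (card (convex_polys_n n)))"
      by simp
    also have "\<dots> \<le> 4 * (real n + 1) ^ 5 / (tilt y * y powr a) ^ n *
        (((3 + sqrt 5) / 2) ^ 19 * (real n + 1) ^ 2 * ((3 - sqrt 5) / 2) ^ n)"
      using card_tail_le[OF y tail sub] inverse_card_convex_polys_n_le[OF that] pos
      by (intro mult_mono) auto
    also have "\<dots> = C * ((real n + 1) ^ 7 * q ^ n)"
      unfolding C_def q_def using pos by (simp add: field_simps power_divide flip: power_add)
    finally show ?thesis .
  qed
  then have bound: "\<forall>\<^sub>F n in sequentially.
      real (card (Hs n)) / real (card (convex_polys_n n)) \<le> C * ((real n + 1) ^ 7 * q ^ n)"
    by (rule eventually_mono[OF eventually_ge_at_top[of 19]])
  have "(\<lambda>n. C * ((real n + 1) ^ 7 * q ^ n)) \<longlonglongrightarrow> C * 0"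
    using q by (intro tendsto_mult tendsto_const poly_times_power_tendsto_0)
  then have lim: "(\<lambda>n. C * ((real n + 1) ^ 7 * q ^ n)) \<longlonglongrightarrow> 0"
    by simp
  show ?thesis
    by (rule real_tendsto_sandwich[OF _ bound tendsto_const lim]) simp
qed

lemma fraction_d4_ge_tendsto_0:
  assumes "1 / sqrt 5 < a"
  shows "(\<lambda>n. real (card {P \<in> convex_polys_n n. a * real n \<le> real (d 4 P)}) /
    real (card (convex_polys_n n))) \<longlonglongrightarrow> 0"
proof -
  obtain y where y: "1 < y" "(3 - sqrt 5) / 2 < tilt y * y powr a"
    using exists_tilt_powr_gt_right[OF assms] by auto
  show ?thesis
  proof (rule fraction_tendsto_0[OF _ y(2)])
    fix n P assume "P \<in> {P \<in> convex_polys_n n. a * real n \<le> real (d 4 P)}"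
    then have "y powr (a * real n) \<le> y powr real (d 4 P)"
      using y by (intro powr_mono) auto
    then show "y powr (a * real n) \<le> y ^ d 4 P"
      using y by (simp add: powr_realpow)
  qed (use y in auto)
qed

lemma fraction_d4_le_tendsto_0:
  assumes "a < 1 / sqrt 5"
  shows "(\<lambda>n. real (card {P \<in> convex_polys_n n. real (d 4 P) \<le> a * real n}) /
    real (card (convex_polys_n n))) \<longlonglongrightarrow> 0"
proof -
  obtain y where y: "0 < y" "y < 1" "(3 - sqrt 5) / 2 < tilt y * y powr a"
    using exists_tilt_powr_gt_left[OF assms] by auto
  show ?thesis
  proof (rule fraction_tendsto_0[OF y(1) y(3)])
    fix n P assume "P \<in> {P \<in> convex_polys_n n. real (d 4 P) \<le> a * real n}"
    then have "y powr (a * real n) \<le> y powr real (d 4 P)"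
      using y by (intro powr_mono') auto
    then show "y powr (a * real n) \<le> y ^ d 4 P"
      using y by (simp add: powr_realpow)
  qed auto
qed

lemma sum_le_threshold_plus_tail:
  fixes f :: "'a \<Rightarrow> real" and t M :: real
  assumes "finite S" "\<And>x. x \<in> S \<Longrightarrow> f x \<le> M" "0 \<le> t"
  shows "(\<Sum>x\<in>S. f x) \<le> t * card S + M * card {x \<in> S. t \<le> f x}"
proof -
  let ?H = "{x \<in> S. t \<le> f x}"
  have "(\<Sum>x\<in>S. f x) = (\<Sum>x\<in>?H. f x) + (\<Sum>x\<in>S - ?H. f x)"
    using assms(1) by (subst sum.subset_diff[of ?H]) auto
  also have "\<dots> \<le> (\<Sum>x\<in>?H. M) + (\<Sum>x\<in>S - ?H. t)"
    using assms(2) by (intro add_mono sum_mono) auto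
  also have "(\<Sum>x\<in>S - ?H. t) \<le> (\<Sum>x\<in>S. t)"
    using assms(1,3) by (intro sum_mono2) auto
  finally show ?thesis
    by (simp add: mult.commute)
qed

lemma threshold_minus_tail_le_sum:
  fixes f :: "'a \<Rightarrow> real" and t :: real
  assumes "finite S" "\<And>x. x \<in> S \<Longrightarrow> 0 \<le> f x"
  shows "t * (real (card S) - real (card {x \<in> S. f x \<le> t})) \<le> (\<Sum>x\<in>S. f x)"
proof -
  let ?L = "{x \<in> S. f x \<le> t}"
  have "t * (real (card S) - real (card ?L)) = (\<Sum>x\<in>S - ?L. t)"
    using assms(1) by (simp add: card_Diff_subset card_mono of_nat_diff)
  also have "\<dots> \<le> (\<Sum>x\<in>S - ?L. f x)"
    by (intro sum_mono) auto
  also have "\<dots> \<le> (\<Sum>x\<in>S. f x)"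
    using assms by (intro sum_mono2) auto
  finally show ?thesis .
qed

lemma expected_d4_over_n_bounds:
  fixes al be :: real
  assumes n: "19 \<le> n" and al: "0 \<le> al" and be: "be \<le> 1"
  defines "S \<equiv> convex_polys_n n"
  defines "H \<equiv> {P \<in> S. al * real n \<le> real (d 4 P)}" and "L \<equiv> {P \<in> S. real (d 4 P) \<le> be * real n}"
  shows "expected_d4 n / real n \<le> al + real (card H) / real (card S)"
    and "be - real (card L) / real (card S) \<le> expected_d4 n / real n"
proof -
  have "0 < ((3 + sqrt 5) / 2) ^ (n - 19) / (real n + 1) ^ 2"
    by (simp add: add_pos_nonneg)
  then have S: "0 < real (card S)"
    using card_convex_polys_n_lower[OF n] unfolding S_def by linarith
  have n: "0 < real n"
    using n by simp
  have E: "expected_d4 n / real n = (\<Sum>P\<in>S. real (d 4 P)) / (real (card S) * real n)"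
    unfolding expected_d4_def S_def by simp
  have "(\<Sum>P\<in>S. real (d 4 P)) \<le> al * real n * real (card S) + real n * real (card H)"
    unfolding H_def S_def using al n d4_le
    by (intro sum_le_threshold_plus_tail finite_convex_polys_n) auto
  then have "expected_d4 n / real n \<le> (al * real n * real (card S) + real n * real (card H)) / (real (card S) * real n)"
    unfolding E using S n by (intro divide_right_mono) auto
  also have "\<dots> = al + real (card H) / real (card S)"
    using S n by (simp add: field_simps)
  finally show "expected_d4 n / real n \<le> al + real (card H) / real (card S)" .
  have "be * real (card L) \<le> real (card L)"
    using be mult_right_mono[of be 1 "real (card L)"] by simp
  then have "be * real (card L) / real (card S) \<le> real (card L) / real (card S)"
    using S by (intro divide_right_mono) auto
  moreover have "be * real n * (real (card S) - real (card L)) / (real (card S) * real n) =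
      be - be * real (card L) / real (card S)"
    using S n by (simp add: field_simps)
  ultimately have "be - real (card L) / real (card S) \<le>
      be * real n * (real (card S) - real (card L)) / (real (card S) * real n)"
    by linarith
  also have "\<dots> \<le> expected_d4 n / real n"
    unfolding E L_def S_def using S n threshold_minus_tail_le_sum[OF finite_convex_polys_n, of n "\<lambda>P. real (d 4 P)" "be * real n"]
    by (intro divide_right_mono) (auto simp: S_def)
  finally show "be - real (card L) / real (card S) \<le> expected_d4 n / real n" .
qed

lemma expected_d4_over_n_tendsto: "(\<lambda>n. expected_d4 n / real n) \<longlonglongrightarrow> 1 / sqrt 5"
proof (rule tendstoI)
  fix e :: real assume "0 < e"
  define e' where "e' = min e (1 / 2)"
  have e': "0 < e'" "e' \<le> e"
    unfolding e'_def using \<open>0 < e\<close> by auto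
  have sqrt5: "0 < 1 / sqrt (5::real)" "1 / sqrt (5::real) < 1"
    using sqrt_5_bounds by auto
  let ?frac = "\<lambda>n A. real (card {P \<in> convex_polys_n n. A P}) / real (card (convex_polys_n n))"
  have "\<forall>\<^sub>F n in sequentially. ?frac n (\<lambda>P. (1 / sqrt 5 + e' / 2) * real n \<le> real (d 4 P)) < e' / 2"
    using e' by (intro order_tendstoD(2)[OF fraction_d4_ge_tendsto_0]) auto
  moreover have "\<forall>\<^sub>F n in sequentially. ?frac n (\<lambda>P. real (d 4 P) \<le> (1 / sqrt 5 - e' / 2) * real n) < e' / 2"
    using e' by (intro order_tendstoD(2)[OF fraction_d4_le_tendsto_0]) auto
  ultimately show "\<forall>\<^sub>F n in sequentially. dist (expected_d4 n / real n) (1 / sqrt 5) < e"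
    using eventually_ge_at_top[of 19]
  proof eventually_elim
    case (elim n)
    have "0 \<le> 1 / sqrt 5 + e' / 2" "1 / sqrt 5 - e' / 2 \<le> 1"
      using e' sqrt5 by linarith+
    note bounds = expected_d4_over_n_bounds[OF elim(3) this]
    have "expected_d4 n / real n < 1 / sqrt 5 + e'" "1 / sqrt 5 - e' < expected_d4 n / real n"
      using bounds elim(1,2) by linarith+
    then show ?case
      using e' unfolding dist_real_def by (simp add: abs_less_iff)
  qed
qed

lemma tendsto_divide_linear_minus_sqrt:
  assumes lim: "(\<lambda>n. f n / real n) \<longlonglongrightarrow> a" and b: "b \<noteq> 0"
  shows "(\<lambda>n. f n / (b * real n - c * sqrt (real n))) \<longlonglongrightarrow> a / b"
proof -
  have "(\<lambda>n. b - c * sqrt (inverse (real n))) \<longlonglongrightarrow> b - c * sqrt 0"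
    by (intro tendsto_intros lim_inverse_n)
  then have "(\<lambda>n. (f n / real n) / (b - c * sqrt (inverse (real n)))) \<longlonglongrightarrow> a / b"
    using b by (intro tendsto_divide lim) auto
  moreover have "(\<lambda>n. (f n / real n) / (b - c * sqrt (inverse (real n)))) =
      (\<lambda>n. f n / (b * real n - c * sqrt (real n)))"
  proof
    fix n
    have "real n * sqrt (inverse (real n)) = sqrt (real n)"
      by (simp add: real_sqrt_inverse real_div_sqrt divide_inverse[symmetric])
    then have "real n * (b - c * sqrt (inverse (real n))) = b * real n - c * sqrt (real n)"
      by (simp add: algebra_simps)
    then show "(f n / real n) / (b - c * sqrt (inverse (real n))) = f n / (b * real n - c * sqrt (real n))"
      by (metis divide_divide_eq_left)
  qed
  ultimately show ?thesis
    by simp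
qed

theorem mainTheorem7:
  shows "(\<lambda>n. expected_d4 n /
           (real n / sqrt 5 - root 4 125 * (sqrt 5 - 1) * sqrt (real n) / (10 * sqrt pi)))
         \<longlonglongrightarrow> 1"
proof -
  have "(\<lambda>n. expected_d4 n / (1 / sqrt 5 * real n - root 4 125 * (sqrt 5 - 1) / (10 * sqrt pi) * sqrt (real n)))
      \<longlonglongrightarrow> (1 / sqrt 5) / (1 / sqrt 5)"
    by (rule tendsto_divide_linear_minus_sqrt[OF expected_d4_over_n_tendsto]) simp
  then show ?thesis
    by simp
qed

end
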